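(* In the Nakagami model with parameters $L_c>0$, $L_s>0$, the distortion exponent achievable by the hybrid digital-analog scheme with $\eta^2=\rho^{r_h}$, $$\Delta_{hda}(L_s,L_c):=\sup_{r_h\in\mathbb R}\ \lim_{\rho\to\infty}-\frac{\log ED_{hda}(\rho^{r_h})}{\log\rho},$$ equals $$\Delta_{hda}(L_s,L_c)=\min\{1,L_s+L_c\}+\frac{\min\{1,L_c\}\,(L_s-1)^+}{L_s-1+\min\{1,L_c\}}.$$
   Context: Nakagami model: for SNR $\rho>0$, the channel gain is $H=\rho H_0$ and the side-information gain is $\Gamma=\rho\Gamma_0$, where $H_0,\Gamma_0$ are independent, $H_0$ is Gamma distributed with shape $L_c$ and scale $1/L_c$, and $\Gamma_0$ is Gamma distributed with shape $L_s$ and scale $1/L_s$ (Gamma$(L,\theta)$ density $\frac{1}{\theta^L\Gamma(L)}x^{L-1}e^{-x/\theta}$, $x\ge0$). $(x)^+=\max\{0,x\}$. HDA expected distortion: for a parameter $\eta^2>0$, define the outage set $\mathcal O_h=\{(h,\gamma): h(1+\gamma)\le \eta^2(1+h)\}$ and $$ED_{hda}(\eta^2)=\mathrm E\!\left[\frac{\mathbf 1\{(H,\Gamma)\notin\mathcal O_h\}}{1+\Gamma+\eta^2(1+H)}\right]+\mathrm E\!\left[\frac{\mathbf 1\{(H,\Gamma)\in\mathcal O_h\}}{1+\Gamma}\right].$$ *)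

theory Defs
  imports "HOL-Analysis.Analysis"
begin

definition gamma_density :: "real \<Rightarrow> real \<Rightarrow> real \<Rightarrow> real" where
  "gamma_density L \<theta> x =
     (if 0 \<le> x then x powr (L - 1) * exp (- x / \<theta>) / (\<theta> powr L * Gamma L) else 0)"

text \<open>Distortion realised by HDA for given realisations h (channel gain) and g (side information gain).\<close>
definition hda_loss :: "real \<Rightarrow> real \<Rightarrow> real \<Rightarrow> real" where
  "hda_loss \<eta>2 h g =
     (if h * (1 + g) \<le> \<eta>2 * (1 + h) then 1 / (1 + g)
      else 1 / (1 + g + \<eta>2 * (1 + h)))"

text \<open>Expected HDA distortion in the Nakagami model at SNR rho:
  H = rho H0, Gamma = rho Gamma0, H0 ~ Gamma(Lc, 1/Lc), Gamma0 ~ Gamma(Ls, 1/Ls) independent.\<close>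
definition ED_hda :: "real \<Rightarrow> real \<Rightarrow> real \<Rightarrow> real \<Rightarrow> real" where
  "ED_hda Lc Ls \<rho> \<eta>2 =
     integral\<^sup>L (lborel \<Otimes>\<^sub>M lborel)
       (\<lambda>(h0, g0). gamma_density Lc (1 / Lc) h0 * gamma_density Ls (1 / Ls) g0
                    * hda_loss \<eta>2 (\<rho> * h0) (\<rho> * g0))"

definition hda_exponent :: "real \<Rightarrow> real \<Rightarrow> real \<Rightarrow> real" where
  "hda_exponent Lc Ls r = Lim at_top (\<lambda>\<rho>. - ln (ED_hda Lc Ls \<rho> (\<rho> powr r)) / ln \<rho>)"

end

theory Submission
  imports Defs
begin

text \<open>
  Write \<open>H = \<rho> H0\<close>, \<open>\<Gamma> = \<rho> \<Gamma>0\<close> and \<open>\<eta>\<^sup>2 = \<rho> powr r\<close>. Since the Gamma densities behave like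
  \<open>x powr (L - 1)\<close> near \<open>0\<close>, the event \<open>H0 \<approx> \<rho> powr -\<alpha>\<close>, \<open>\<Gamma>0 \<approx> \<rho> powr -\<beta>\<close> has probability of order
  \<open>\<rho> powr -(Lc \<alpha> + Ls \<beta>)\<close>; restricting the expectation to such a box and bounding the loss there
  from below gives \<open>ED \<ge> c \<rho> powr -D\<close>. Conversely, in and out of outage the loss is bounded
  pointwise by one of finitely many monomials \<open>\<rho> powr -c * H0 powr -s * \<Gamma>0 powr -t\<close>, weighted
  geometric means of the terms of \<open>1 + \<Gamma> + \<eta>\<^sup>2 (1 + H)\<close> and of the outage constraint. Their
  expectations are Gamma moments, finite for \<open>s < Lc\<close> and \<open>t < Ls\<close>, which gives
  \<open>ED \<le> C \<rho> powr -D'\<close> for every \<open>D' < D\<close>. Matching the two bounds in the regimes \<open>r \<le> -1\<close>,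
  \<open>-1 < r < 0\<close>, \<open>r = 0\<close>, \<open>0 < r < 1\<close> and \<open>r \<ge> 1\<close> gives the exponent in closed form. Its supremum
  over \<open>r\<close> is \<open>min 1 (Ls + Lc)\<close> if \<open>Ls \<le> 1\<close>, approached as \<open>r\<close> tends to \<open>0\<close> from below; if
  \<open>Ls > 1\<close> it is attained where the branches \<open>r + Ls (1 - r)\<close> and \<open>1 + min 1 Lc * r\<close> cross.
\<close>

lemma powr_le_one_of_nonpos: "1 \<le> (x :: real) \<Longrightarrow> a \<le> 0 \<Longrightarrow> x powr a \<le> 1"
  using powr_mono[of a 0 x] by simp

lemma eventually_ge_powr:
  fixes r K :: real
  assumes "r > 0"
  shows "eventually (\<lambda>\<rho>. K \<le> \<rho> powr r) at_top"
  using eventually_ge_at_top[of "max 1 K powr (1 / r)"]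
proof eventually_elim
  case (elim \<rho>)
  have "max 1 K = (max 1 K powr (1 / r)) powr r"
    using assms by (simp add: powr_powr)
  also have "\<dots> \<le> \<rho> powr r"
    using elim assms by (intro powr_mono2) auto
  finally show ?case by simp
qed

lemma eventually_powr_le_half:
  fixes r :: real
  assumes "r < 0"
  shows "eventually (\<lambda>\<rho>. \<rho> powr r \<le> 1 / 2) at_top"
proof -
  have "eventually (\<lambda>\<rho>. 2 \<le> \<rho> powr (- r)) at_top"
    using assms by (intro eventually_ge_powr) simp
  with eventually_gt_at_top[of 0] show ?thesis
  proof eventually_elim
    case (elim \<rho>)
    then have "\<rho> powr r = 1 / \<rho> powr (- r)"
      by (simp add: powr_minus_divide)
    also have "\<dots> \<le> 1 / 2"
      using elim by (intro divide_left_mono) auto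
    finally show ?case .
  qed
qed

lemma tendsto_const_div_ln: "((\<lambda>\<rho>. K / ln \<rho>) \<longlongrightarrow> (0 :: real)) at_top"
  by (rule tendsto_divide_0[OF tendsto_const filterlim_at_top_imp_at_infinity[OF ln_at_top]])

lemma convex_combination_le:
  fixes L a b p q :: real
  assumes "0 \<le> L" "a \<le> L" "b \<le> L" "0 \<le> p" "0 \<le> q" "p + q \<le> 1"
  shows "p * a + q * b \<le> L"
proof -
  have "p * a \<le> p * L" "q * b \<le> q * L"
    using assms by (auto intro: mult_left_mono)
  moreover have "0 \<le> (1 - p - q) * L"
    using assms by simp
  ultimately show ?thesis
    by (simp add: algebra_simps)
qed

lemma obtain_factor_below_one:
  fixes D D' :: real
  assumes "D' < D"
  obtains \<theta> where "0 < \<theta>" "\<theta> < 1" "D' < \<theta> * D"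
proof (cases "D' < D / 2")
  case True
  then show thesis
    using that[of "1 / 2"] by simp
next
  case False
  with assms have "D > 0" by simp
  with False assms show thesis
    using that[of "(D + D') / (2 * D)"] by (simp add: field_simps)
qed

lemma mult_less_of_le:
  fixes \<theta> s L :: real
  assumes "0 < \<theta>" "\<theta> < 1" "s \<le> L" "L > 0"
  shows "\<theta> * s < L"
proof (cases "s \<le> 0")
  case True
  then have "\<theta> * s \<le> 0"
    using assms by (simp add: mult_nonneg_nonpos)
  with assms show ?thesis by simp
next
  case False
  then have "\<theta> * s < 1 * s"
    using assms by (intro mult_strict_right_mono) auto
  with assms show ?thesis by simp
qed

lemma min_affine_le_crossing:
  fixes K m r :: real
  assumes "K > 0" "m > 0"
  shows "min (1 + K * (1 - r)) (1 + m * r) \<le> 1 + m * (K / (K + m))"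
proof (cases "r \<le> K / (K + m)")
  case True
  then have "m * r \<le> m * (K / (K + m))"
    using assms by (intro mult_left_mono) auto
  then show ?thesis by simp
next
  case False
  then have "K * (1 - r) \<le> K * (1 - K / (K + m))"
    using assms by (intro mult_left_mono) auto
  also have "\<dots> = m * (K / (K + m))"
    using assms by (simp add: field_simps)
  finally show ?thesis by simp
qed

lemma SUP_eq_of_approx:
  fixes f :: "'a \<Rightarrow> real"
  assumes upper: "\<And>x. f x \<le> S" and approx: "\<And>\<epsilon>. \<epsilon> > 0 \<Longrightarrow> \<exists>x. S - \<epsilon> \<le> f x"
  shows "(SUP x. f x) = S"
proof (rule cSup_eq_non_empty)
  fix y
  assume y: "\<And>z. z \<in> range f \<Longrightarrow> z \<le> y"
  show "S \<le> y"
  proof (rule ccontr)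
    assume "\<not> S \<le> y"
    then obtain x where "S - (S - y) / 2 \<le> f x"
      using approx[of "(S - y) / 2"] by auto
    with y[of "f x"] \<open>\<not> S \<le> y\<close> show False
      by (simp add: field_simps)
  qed
qed (use upper in auto)

lemma (in pair_sigma_finite)
  fixes f :: "'a \<Rightarrow> real" and g :: "'b \<Rightarrow> real"
  assumes f: "integrable M1 f" and g: "integrable M2 g"
  shows integrable_product: "integrable (M1 \<Otimes>\<^sub>M M2) (\<lambda>(x, y). f x * g y)"
    and integral_product: "(\<integral>z. (\<lambda>(x, y). f x * g y) z \<partial>(M1 \<Otimes>\<^sub>M M2)) = integral\<^sup>L M1 f * integral\<^sup>L M2 g"
proof -
  have [measurable]: "f \<in> borel_measurable M1" "g \<in> borel_measurable M2"
    using f g by auto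
  show int: "integrable (M1 \<Otimes>\<^sub>M M2) (\<lambda>(x, y). f x * g y)"
  proof (rule Fubini_integrable)
    show "integrable M1 (\<lambda>x. \<integral>y. norm (case (x, y) of (x, y) \<Rightarrow> f x * g y) \<partial>M2)"
      using f by (simp add: abs_mult)
  qed (use g in auto)
  show "(\<integral>z. (\<lambda>(x, y). f x * g y) z \<partial>(M1 \<Otimes>\<^sub>M M2)) = integral\<^sup>L M1 f * integral\<^sup>L M2 g"
    using integral_fst[of "\<lambda>x y. f x * g y"] int by simp
qed

section \<open>The unit-mean Gamma density\<close>

abbreviation unit_gamma :: "real \<Rightarrow> real \<Rightarrow> real" where
  "unit_gamma L \<equiv> gamma_density L (1 / L)"

lemma unit_gamma_nonneg: "L > 0 \<Longrightarrow> unit_gamma L x \<ge> 0"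
  by (simp add: gamma_density_def)

lemma unit_gamma_nonpos_eq_0: "x \<le> 0 \<Longrightarrow> unit_gamma L x = 0"
  by (cases "x = 0") (auto simp: gamma_density_def)

lemma unit_gamma_measurable [measurable]: "unit_gamma L \<in> borel_measurable borel"
  unfolding gamma_density_def by measurable

lemma integrable_powr_exp_kernel:
  fixes L a :: real
  assumes L: "L > 0" and a: "a > -1"
  shows "integrable lborel (\<lambda>x. indicator {0..} x * x powr a * exp (- (L * x)))"
proof -
  define g where "g = (\<lambda>t::real. indicator {0..} t * t powr a / exp t)"
  have [measurable]: "g \<in> borel_measurable lborel"
    unfolding g_def by measurable
  have "(\<integral>\<^sup>+t. ennreal (g t) \<partial>lborel) = ennreal (Gamma (a + 1))"
    using Gamma_conv_nn_integral_real[of "a + 1"] a unfolding g_def by simp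
  then have "integrable lborel g"
    by (intro integrableI_nn_integral_finite) (auto simp: g_def)
  then have "integrable lborel (\<lambda>x. (1 / L powr a) * g (0 + L * x))"
    using lborel_integrable_real_affine_iff[of L g 0] L by simp
  moreover have "(1 / L powr a) * g (0 + L * x) = indicator {0..} x * x powr a * exp (- (L * x))"
    for x
    using L by (cases "x \<ge> 0")
      (auto simp: g_def powr_mult exp_minus field_simps indicator_def zero_le_mult_iff)
  ultimately show ?thesis
    by simp
qed

lemma integrable_unit_gamma_moment:
  assumes L: "L > 0" and s: "s < L"
  shows "integrable lborel (\<lambda>x. unit_gamma L x * x powr (- s))"
proof -
  have "unit_gamma L x * x powr (- s)
      = (1 / ((1 / L) powr L * Gamma L)) * (indicator {0..} x * x powr (L - 1 - s) * exp (- (L * x)))"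
    for x
  proof (cases "x > 0")
    case True
    then have "x powr (L - 1) * x powr (- s) = x powr (L - 1 - s)"
      by (simp add: powr_add [symmetric])
    with True L show ?thesis
      by (simp add: gamma_density_def indicator_def field_simps)
  qed (cases "x = 0"; auto simp: gamma_density_def indicator_def)
  then show ?thesis
    using integrable_powr_exp_kernel[OF L, of "L - 1 - s"] s by simp
qed

lemma integrable_unit_gamma:
  assumes "L > 0"
  shows "integrable lborel (unit_gamma L)"
proof -
  have "(\<lambda>x. unit_gamma L x * x powr (- 0)) = unit_gamma L"
    by (auto simp: fun_eq_iff unit_gamma_nonpos_eq_0)
  with integrable_unit_gamma_moment[OF assms, of 0] assms show ?thesis
    by simp
qed

lemma unit_gamma_lower_bound:
  assumes L: "L > 0"
  obtains c where "c > 0"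
    and "\<And>a x. 0 < a \<Longrightarrow> a \<le> 1 \<Longrightarrow> a / 2 \<le> x \<Longrightarrow> x \<le> a \<Longrightarrow> c * a powr (L - 1) \<le> unit_gamma L x"
proof
  define Z where "Z = (1 / L) powr L * Gamma L"
  have Z: "Z > 0"
    using L by (simp add: Z_def)
  show "exp (- (\<bar>L - 1\<bar> * ln 2)) * exp (- L) / Z > 0"
    using Z by simp
  fix a x :: real
  assume a: "0 < a" "a \<le> 1" and x: "a / 2 \<le> x" "x \<le> a"
  then have "x > 0" by simp
  \<comment> \<open>on \<open>[a/2, a]\<close>, \<open>x powr (L - 1)\<close> is within a factor \<open>2 powr \<bar>L - 1\<bar>\<close> of \<open>a powr (L - 1)\<close>\<close>
  have "ln (a / 2) \<le> ln x" "ln x \<le> ln a"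
    using a x \<open>x > 0\<close> by auto
  then have "\<bar>ln x - ln a\<bar> \<le> ln 2"
    using a by (auto simp: ln_div)
  then have "\<bar>(L - 1) * (ln x - ln a)\<bar> \<le> \<bar>L - 1\<bar> * ln 2"
    by (simp add: abs_mult mult_left_mono)
  then have "(L - 1) * ln a - \<bar>L - 1\<bar> * ln 2 \<le> (L - 1) * ln x"
    by (simp add: algebra_simps abs_le_iff)
  then have "exp ((L - 1) * ln a - \<bar>L - 1\<bar> * ln 2) \<le> exp ((L - 1) * ln x)"
    by simp
  then have "a powr (L - 1) * exp (- (\<bar>L - 1\<bar> * ln 2)) \<le> x powr (L - 1)"
    using a \<open>x > 0\<close> by (simp add: powr_def exp_diff exp_minus divide_inverse)
  moreover have "exp (- L) \<le> exp (- x / (1 / L))"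
    using x a L by (simp add: mult_le_cancel_left1)
  ultimately have "a powr (L - 1) * exp (- (\<bar>L - 1\<bar> * ln 2)) * exp (- L)
      \<le> x powr (L - 1) * exp (- x / (1 / L))"
    by (intro mult_mono) auto
  then show "exp (- (\<bar>L - 1\<bar> * ln 2)) * exp (- L) / Z * a powr (L - 1) \<le> unit_gamma L x"
    using Z \<open>x > 0\<close> by (simp add: gamma_density_def Z_def field_simps)
qed

lemma unit_gamma_interval_mass:
  assumes L: "L > 0"
  obtains c where "c > 0"
    and "\<And>a. 0 < a \<Longrightarrow> a \<le> 1 \<Longrightarrow> c * a powr L \<le> (\<integral>x. unit_gamma L x * indicator {a/2..a} x \<partial>lborel)"
proof -
  obtain c where c: "c > 0"
    and bound: "\<And>a x. 0 < a \<Longrightarrow> a \<le> 1 \<Longrightarrow> a / 2 \<le> x \<Longrightarrow> x \<le> a \<Longrightarrow> c * a powr (L - 1) \<le> unit_gamma L x"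
    using unit_gamma_lower_bound[OF L] by blast
  have "c / 2 * a powr L \<le> (\<integral>x. unit_gamma L x * indicator {a/2..a} x \<partial>lborel)"
    if a: "0 < a" "a \<le> 1" for a
  proof -
    have "c / 2 * a powr L = (\<integral>x. c * a powr (L - 1) * indicator {a/2..a} x \<partial>lborel)"
      using a by (simp add: powr_diff field_simps)
    also have "\<dots> \<le> (\<integral>x. unit_gamma L x * indicator {a/2..a} x \<partial>lborel)"
    proof (rule integral_mono)
      show "integrable lborel (\<lambda>x. unit_gamma L x * indicator {a/2..a} x)"
        using integrable_unit_gamma[OF L] by (intro integrable_real_mult_indicator) auto
      show "integrable lborel (\<lambda>x. c * a powr (L - 1) * indicator {a/2..a} x)"
        using a by (intro integrable_mult_right integrable_real_indicator) auto
    qed (use a bound in \<open>auto simp: indicator_def\<close>)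
    finally show ?thesis .
  qed
  with c show thesis
    using that[of "c / 2"] by simp
qed

definition gamma_moment :: "real \<Rightarrow> real \<Rightarrow> real" where
  "gamma_moment L s = (\<integral>x. unit_gamma L x * x powr (- s) \<partial>lborel)"

lemma gamma_moment_nonneg: "L > 0 \<Longrightarrow> gamma_moment L s \<ge> 0"
  unfolding gamma_moment_def using unit_gamma_nonneg by (simp add: integral_nonneg)

section \<open>The HDA loss\<close>

definition hda_outage :: "real \<Rightarrow> real \<Rightarrow> real \<Rightarrow> bool" where
  "hda_outage e h g \<longleftrightarrow> h * (1 + g) \<le> e * (1 + h)"

lemma hda_loss_outage: "hda_outage e h g \<Longrightarrow> hda_loss e h g = 1 / (1 + g)"
  by (simp add: hda_outage_def hda_loss_def)

lemma hda_loss_no_outage: "\<not> hda_outage e h g \<Longrightarrow> hda_loss e h g = 1 / (1 + g + e * (1 + h))"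
  by (simp add: hda_outage_def hda_loss_def)

lemma hda_outage_if_le:
  assumes "0 \<le> h" "0 \<le> g" "1 + g \<le> e"
  shows "hda_outage e h g"
proof -
  have "h * (1 + g) \<le> h * e"
    using assms by (intro mult_left_mono) auto
  also have "\<dots> \<le> e * (1 + h)"
    using assms by (simp add: algebra_simps)
  finally show ?thesis
    by (simp add: hda_outage_def)
qed

lemma hda_loss_le: "e > 0 \<Longrightarrow> h \<ge> 0 \<Longrightarrow> g \<ge> 0 \<Longrightarrow> hda_loss e h g \<le> 1 / (1 + g)"
  by (auto simp: hda_loss_def intro!: frac_le)

lemma hda_loss_ge: "e > 0 \<Longrightarrow> h \<ge> 0 \<Longrightarrow> g \<ge> 0 \<Longrightarrow> 1 / (1 + g + e * (1 + h)) \<le> hda_loss e h g"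
  by (auto simp: hda_loss_def intro!: frac_le)

lemma hda_loss_nonneg: "e > 0 \<Longrightarrow> h \<ge> 0 \<Longrightarrow> g \<ge> 0 \<Longrightarrow> hda_loss e h g \<ge> 0"
  by (auto simp: hda_loss_def)

lemma hda_loss_le_1: "e > 0 \<Longrightarrow> h \<ge> 0 \<Longrightarrow> g \<ge> 0 \<Longrightarrow> hda_loss e h g \<le> 1"
  using hda_loss_le[of e h g] by (simp add: order_trans)

lemma hda_loss_le_powr:
  assumes e: "e > 0" and h: "h \<ge> 0" and g: "g \<ge> 0" and le: "hda_loss e h g \<le> u"
    and \<theta>: "0 < \<theta>" "\<theta> \<le> 1"
  shows "hda_loss e h g \<le> u powr \<theta>"
proof -
  have l: "0 \<le> hda_loss e h g" "hda_loss e h g \<le> 1"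
    using hda_loss_nonneg[OF e h g] hda_loss_le_1[OF e h g] .
  then have "hda_loss e h g = hda_loss e h g powr 1"
    by simp
  also have "\<dots> \<le> hda_loss e h g powr \<theta>"
    using l \<theta> by (intro powr_mono') auto
  also have "\<dots> \<le> u powr \<theta>"
    using l le \<theta> by (intro powr_mono2) auto
  finally show ?thesis .
qed

lemma hda_loss_antimono:
  assumes e: "e > 0" and h: "0 \<le> h" "h \<le> h'" and g: "0 \<le> g" "g \<le> g'"
  shows "hda_loss e h' g' \<le> hda_loss e h g"
proof (cases "hda_outage e h' g'")
  case True
  have "hda_outage e h g"
    unfolding hda_outage_def
  proof (rule ccontr)
    assume "\<not> h * (1 + g) \<le> e * (1 + h)"
    then have "e < h * (1 + g - e)"
      by (simp add: algebra_simps)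
    moreover from this e h have "0 < 1 + g - e"
      by (smt (verit) mult_nonneg_nonpos)
    ultimately have "e < h' * (1 + g' - e)"
      using h g by (smt (verit) mult_mono)
    then show False
      using True by (simp add: hda_outage_def algebra_simps)
  qed
  with True g show ?thesis
    by (simp add: hda_loss_outage frac_le)
next
  case False
  have "0 < 1 + g" "0 < 1 + g + e * (1 + h)"
    using e h g by (auto intro: add_pos_nonneg)
  moreover have "1 + g \<le> 1 + g' + e * (1 + h')"
    using e h g by (simp add: add_increasing2)
  moreover have "1 + g + e * (1 + h) \<le> 1 + g' + e * (1 + h')"
    using e h g by (intro add_mono mult_left_mono) auto
  ultimately show ?thesis
    using False by (auto simp: hda_loss_def hda_outage_def intro!: frac_le)
qed

lemma hda_loss_measurable [measurable]:
  "(\<lambda>(x, y). hda_loss e (\<rho> * x) (\<rho> * y)) \<in> borel_measurable (lborel \<Otimes>\<^sub>M lborel)"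
  unfolding hda_loss_def by measurable

section \<open>Decay exponents\<close>

definition decays_at_most :: "(real \<Rightarrow> real) \<Rightarrow> real \<Rightarrow> bool" where
  "decays_at_most f D \<longleftrightarrow> (\<exists>c>0. eventually (\<lambda>\<rho>. c * \<rho> powr (- D) \<le> f \<rho>) at_top)"

definition decays_at_least :: "(real \<Rightarrow> real) \<Rightarrow> real \<Rightarrow> bool" where
  "decays_at_least f D \<longleftrightarrow> (\<exists>C. eventually (\<lambda>\<rho>. f \<rho> \<le> C * \<rho> powr (- D)) at_top)"

lemma decays_at_most_min:
  "decays_at_most f D1 \<Longrightarrow> decays_at_most f D2 \<Longrightarrow> decays_at_most f (min D1 D2)"
  by (simp add: min_def)

lemma decays_at_most_mono:
  assumes "decays_at_most f D" and "D \<le> D'"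
  shows "decays_at_most f D'"
proof -
  obtain c where "c > 0" and ev: "eventually (\<lambda>\<rho>. c * \<rho> powr (- D) \<le> f \<rho>) at_top"
    using assms(1) by (auto simp: decays_at_most_def)
  have "eventually (\<lambda>\<rho>. c * \<rho> powr (- D') \<le> f \<rho>) at_top"
    using ev eventually_ge_at_top[of 1]
  proof eventually_elim
    case (elim \<rho>)
    have "c * \<rho> powr (- D') \<le> c * \<rho> powr (- D)"
      using elim \<open>c > 0\<close> assms(2) by (intro mult_left_mono powr_mono) auto
    with elim show ?case by simp
  qed
  with \<open>c > 0\<close> show ?thesis
    by (auto simp: decays_at_most_def)
qed

lemma eventually_exponent_lt:
  fixes f :: "real \<Rightarrow> real"
  assumes "decays_at_most f D" and "D < y"
  shows "eventually (\<lambda>\<rho>. - ln (f \<rho>) / ln \<rho> < y) at_top"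
proof -
  obtain c where c: "c > 0" and ev_c: "eventually (\<lambda>\<rho>. c * \<rho> powr (- D) \<le> f \<rho>) at_top"
    using assms(1) by (auto simp: decays_at_most_def)
  have "eventually (\<lambda>\<rho>. - ln c / ln \<rho> < y - D) at_top"
    using assms(2) by (intro order_tendstoD(2)[OF tendsto_const_div_ln]) auto
  then show ?thesis
    using ev_c eventually_gt_at_top[of 1]
  proof eventually_elim
    case (elim \<rho>)
    have "0 < c * \<rho> powr (- D)"
      using c elim by simp
    then have "ln (c * \<rho> powr (- D)) \<le> ln (f \<rho>)"
      using elim by (subst ln_le_cancel_iff) auto
    then have "ln c - D * ln \<rho> \<le> ln (f \<rho>)"
      using c elim by (simp add: ln_mult)
    then have "- ln (f \<rho>) / ln \<rho> \<le> D + - ln c / ln \<rho>"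
      using elim by (simp add: field_simps)
    with elim show ?case by simp
  qed
qed

lemma eventually_exponent_gt:
  fixes f :: "real \<Rightarrow> real"
  assumes "decays_at_most f D" and "decays_at_least f D'" and "y < D'"
  shows "eventually (\<lambda>\<rho>. y < - ln (f \<rho>) / ln \<rho>) at_top"
proof -
  obtain c where c: "c > 0" and ev_c: "eventually (\<lambda>\<rho>. c * \<rho> powr (- D) \<le> f \<rho>) at_top"
    using assms(1) by (auto simp: decays_at_most_def)
  obtain C where ev_C: "eventually (\<lambda>\<rho>. f \<rho> \<le> C * \<rho> powr (- D')) at_top"
    using assms(2) by (auto simp: decays_at_least_def)
  have "eventually (\<lambda>\<rho>. ln (max C 1) / ln \<rho> < D' - y) at_top"
    using assms(3) by (intro order_tendstoD(2)[OF tendsto_const_div_ln]) auto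
  then show ?thesis
    using ev_c ev_C eventually_gt_at_top[of 1]
  proof eventually_elim
    case (elim \<rho>)
    have "0 < f \<rho>"
      using elim c by (smt (verit) powr_gt_zero mult_pos_pos)
    moreover have "f \<rho> \<le> max C 1 * \<rho> powr (- D')"
      using elim by (smt (verit) mult_right_mono powr_ge_zero)
    ultimately have "ln (f \<rho>) \<le> ln (max C 1 * \<rho> powr (- D'))"
      by (subst ln_le_cancel_iff) auto
    also have "\<dots> = ln (max C 1) - D' * ln \<rho>"
      using elim by (subst ln_mult) auto
    also have "ln (max C 1) < (D' - y) * ln \<rho>"
      using elim by (simp add: divide_less_eq)
    finally have "y * ln \<rho> < - ln (f \<rho>)"
      by (simp add: field_simps)
    then show ?case
      using elim by (subst pos_less_divide_eq) auto
  qed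
qed

lemma tendsto_exponent_of_decay:
  fixes f :: "real \<Rightarrow> real"
  assumes lower: "decays_at_most f D"
    and upper: "\<And>D'. D' < D \<Longrightarrow> decays_at_least f D'"
  shows "((\<lambda>\<rho>. - ln (f \<rho>) / ln \<rho>) \<longlongrightarrow> D) at_top"
proof (rule order_tendstoI)
  show "eventually (\<lambda>\<rho>. - ln (f \<rho>) / ln \<rho> < y) at_top" if "D < y" for y
    using lower that by (rule eventually_exponent_lt)
  show "eventually (\<lambda>\<rho>. y < - ln (f \<rho>) / ln \<rho>) at_top" if "y < D" for y
    using that by (intro eventually_exponent_gt[OF lower upper[of "(D + y) / 2"]]) auto
qed

section \<open>Lower bounds on the expected distortion\<close>

lemma integrable_ED_hda_integrand:
  assumes Lc: "Lc > 0" and Ls: "Ls > 0" and \<rho>: "\<rho> > 0" and e: "e > 0"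
  shows "integrable (lborel \<Otimes>\<^sub>M lborel)
    (\<lambda>(x, y). unit_gamma Lc x * unit_gamma Ls y * hda_loss e (\<rho> * x) (\<rho> * y))"
proof (rule Bochner_Integration.integrable_bound)
  show "integrable (lborel \<Otimes>\<^sub>M lborel) (\<lambda>(x, y). unit_gamma Lc x * unit_gamma Ls y)"
    by (rule lborel_pair.integrable_product[OF integrable_unit_gamma[OF Lc] integrable_unit_gamma[OF Ls]])
  have "\<bar>unit_gamma Lc x * unit_gamma Ls y * hda_loss e (\<rho> * x) (\<rho> * y)\<bar>
      \<le> \<bar>unit_gamma Lc x * unit_gamma Ls y\<bar>" for x y
  proof (cases "x > 0 \<and> y > 0")
    case True
    then have "0 \<le> hda_loss e (\<rho> * x) (\<rho> * y)" "hda_loss e (\<rho> * x) (\<rho> * y) \<le> 1"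
      using hda_loss_nonneg hda_loss_le_1 e \<rho> by simp_all
    then show ?thesis
      by (simp add: abs_mult mult_left_le)
  qed (auto simp: unit_gamma_nonpos_eq_0)
  then show "AE z in lborel \<Otimes>\<^sub>M lborel.
      norm ((\<lambda>(x, y). unit_gamma Lc x * unit_gamma Ls y * hda_loss e (\<rho> * x) (\<rho> * y)) z)
      \<le> norm ((\<lambda>(x, y). unit_gamma Lc x * unit_gamma Ls y) z)"
    by auto
qed measurable

lemma ED_hda_eq:
  "ED_hda Lc Ls \<rho> e = (\<integral>z. (\<lambda>(x, y). unit_gamma Lc x * unit_gamma Ls y * hda_loss e (\<rho> * x) (\<rho> * y)) z
     \<partial>(lborel \<Otimes>\<^sub>M lborel))"
  by (simp add: ED_hda_def)

lemma ED_hda_ge_box: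
  assumes Lc: "Lc > 0" and Ls: "Ls > 0" and \<rho>: "\<rho> > 0" and e: "e > 0" and a: "a > 0" and b: "b > 0"
  shows "hda_loss e (\<rho> * a) (\<rho> * b) * ((\<integral>x. unit_gamma Lc x * indicator {a/2..a} x \<partial>lborel)
    * (\<integral>y. unit_gamma Ls y * indicator {b/2..b} y \<partial>lborel)) \<le> ED_hda Lc Ls \<rho> e"
proof -
  define F where "F x = unit_gamma Lc x * indicator {a/2..a} x" for x
  define G where "G y = unit_gamma Ls y * indicator {b/2..b} y" for y
  define l where "l = hda_loss e (\<rho> * a) (\<rho> * b)"
  have FG: "integrable lborel F" "integrable lborel G"
    unfolding F_def G_def using integrable_unit_gamma Lc Ls
    by (auto intro!: integrable_real_mult_indicator)
  have "l * (integral\<^sup>L lborel F * integral\<^sup>L lborel G) = (\<integral>z. l * (\<lambda>(x, y). F x * G y) z \<partial>(lborel \<Otimes>\<^sub>M lborel))"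
    using lborel_pair.integral_product[OF FG] by simp
  also have "\<dots> \<le> ED_hda Lc Ls \<rho> e"
    unfolding ED_hda_eq
  proof (rule integral_mono)
    show "integrable (lborel \<Otimes>\<^sub>M lborel) (\<lambda>z. l * (\<lambda>(x, y). F x * G y) z)"
      using lborel_pair.integrable_product[OF FG] by simp
    fix z :: "real \<times> real"
    obtain x y where z: "z = (x, y)" by (cases z)
    have "l * F x * G y \<le> unit_gamma Lc x * unit_gamma Ls y * hda_loss e (\<rho> * x) (\<rho> * y)"
    proof (cases "x \<in> {a/2..a} \<and> y \<in> {b/2..b}")
      case True
      then have "l \<le> hda_loss e (\<rho> * x) (\<rho> * y)"
        unfolding l_def using \<rho> a b by (intro hda_loss_antimono[OF e]) auto
      moreover have "0 \<le> unit_gamma Lc x * unit_gamma Ls y"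
        using unit_gamma_nonneg Lc Ls by simp
      ultimately show ?thesis
        using True mult_right_mono unfolding F_def G_def by (fastforce simp: mult_ac)
    next
      case False
      then have "F x * G y = 0"
        by (auto simp: F_def G_def)
      moreover have "0 \<le> unit_gamma Lc x * unit_gamma Ls y * hda_loss e (\<rho> * x) (\<rho> * y)"
      proof (cases "x > 0 \<and> y > 0")
        case True
        then show ?thesis
          using unit_gamma_nonneg Lc Ls hda_loss_nonneg[OF e] \<rho> by simp
      qed (auto simp: unit_gamma_nonpos_eq_0)
      ultimately show ?thesis
        by (metis mult.assoc mult_zero_right)
    qed
    then show "l * (\<lambda>(x, y). F x * G y) z
        \<le> (\<lambda>(x, y). unit_gamma Lc x * unit_gamma Ls y * hda_loss e (\<rho> * x) (\<rho> * y)) z"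
      by (simp add: z mult.assoc)
  qed (rule integrable_ED_hda_integrand[OF Lc Ls \<rho> e])
  finally show ?thesis
    by (simp add: l_def F_def[abs_def] G_def[abs_def])
qed

lemma ED_hda_lower_bound:
  assumes Lc: "Lc > 0" and Ls: "Ls > 0"
  obtains c where "c > 0"
    and "\<And>\<rho> e a b. 0 < \<rho> \<Longrightarrow> 0 < e \<Longrightarrow> 0 < a \<Longrightarrow> a \<le> 1 \<Longrightarrow> 0 < b \<Longrightarrow> b \<le> 1 \<Longrightarrow>
      c * a powr Lc * b powr Ls * hda_loss e (\<rho> * a) (\<rho> * b) \<le> ED_hda Lc Ls \<rho> e"
proof -
  obtain cc where cc: "cc > 0"
    and mass_c: "\<And>a. 0 < a \<Longrightarrow> a \<le> 1 \<Longrightarrow> cc * a powr Lc \<le> (\<integral>x. unit_gamma Lc x * indicator {a/2..a} x \<partial>lborel)"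
    using unit_gamma_interval_mass[OF Lc] by blast
  obtain cs where cs: "cs > 0"
    and mass_s: "\<And>b. 0 < b \<Longrightarrow> b \<le> 1 \<Longrightarrow> cs * b powr Ls \<le> (\<integral>y. unit_gamma Ls y * indicator {b/2..b} y \<partial>lborel)"
    using unit_gamma_interval_mass[OF Ls] by blast
  have "cc * cs * a powr Lc * b powr Ls * hda_loss e (\<rho> * a) (\<rho> * b) \<le> ED_hda Lc Ls \<rho> e"
    if \<rho>: "0 < \<rho>" and e: "0 < e" and a: "0 < a" "a \<le> 1" and b: "0 < b" "b \<le> 1" for \<rho> e a b
  proof -
    have "cc * a powr Lc * (cs * b powr Ls) \<le> (\<integral>x. unit_gamma Lc x * indicator {a/2..a} x \<partial>lborel)
        * (\<integral>y. unit_gamma Ls y * indicator {b/2..b} y \<partial>lborel)"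
      using mass_c[OF a] mass_s[OF b] cc cs by (intro mult_mono') auto
    then have "hda_loss e (\<rho> * a) (\<rho> * b) * (cc * a powr Lc * (cs * b powr Ls)) \<le> ED_hda Lc Ls \<rho> e"
      using ED_hda_ge_box[OF Lc Ls \<rho> e a(1) b(1)] hda_loss_nonneg[OF e, of "\<rho> * a" "\<rho> * b"] \<rho> a b
      by (smt (verit) mult_left_mono mult_nonneg_nonneg)
    then show ?thesis
      by (simp add: mult_ac)
  qed
  with cc cs show thesis
    using that[of "cc * cs"] by simp
qed

lemma ED_hda_decays_at_most_witness:
  assumes Lc: "Lc > 0" and Ls: "Ls > 0" and \<alpha>: "\<alpha> \<ge> 0" and \<beta>: "\<beta> \<ge> 0"
    and B: "0 < B" "B \<le> 1" and c0: "c0 > 0"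
    and loss: "eventually (\<lambda>\<rho>. c0 * \<rho> powr (- d)
      \<le> hda_loss (\<rho> powr r) (\<rho> powr (1 - \<alpha>)) (B * \<rho> powr (1 - \<beta>))) at_top"
    and D: "Lc * \<alpha> + Ls * \<beta> + d \<le> D"
  shows "decays_at_most (\<lambda>\<rho>. ED_hda Lc Ls \<rho> (\<rho> powr r)) D"
proof (rule decays_at_most_mono[OF _ D])
  obtain c where c: "c > 0" and ED_ge: "\<And>\<rho> e a b. 0 < \<rho> \<Longrightarrow> 0 < e \<Longrightarrow> 0 < a \<Longrightarrow> a \<le> 1 \<Longrightarrow>
      0 < b \<Longrightarrow> b \<le> 1 \<Longrightarrow> c * a powr Lc * b powr Ls * hda_loss e (\<rho> * a) (\<rho> * b) \<le> ED_hda Lc Ls \<rho> e"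
    using ED_hda_lower_bound[OF Lc Ls] by blast
  have "eventually (\<lambda>\<rho>. c * B powr Ls * c0 * \<rho> powr (- (Lc * \<alpha> + Ls * \<beta> + d))
      \<le> ED_hda Lc Ls \<rho> (\<rho> powr r)) at_top"
    using loss eventually_ge_at_top[of 1]
  proof eventually_elim
    case (elim \<rho>)
    define a where "a = \<rho> powr (- \<alpha>)"
    define b where "b = B * \<rho> powr (- \<beta>)"
    have ab: "0 < a" "a \<le> 1" "0 < b" "b \<le> 1"
      using elim \<alpha> \<beta> B by (auto simp: a_def b_def powr_le_one_of_nonpos intro: mult_le_one)
    have corner: "\<rho> * a = \<rho> powr (1 - \<alpha>)" "\<rho> * b = B * \<rho> powr (1 - \<beta>)"
      using elim by (simp_all add: a_def b_def powr_diff powr_minus field_simps)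
    have "c * B powr Ls * c0 * \<rho> powr (- (Lc * \<alpha> + Ls * \<beta> + d))
        = c * a powr Lc * b powr Ls * (c0 * \<rho> powr (- d))"
      using elim B by (simp add: a_def b_def powr_mult powr_powr powr_add [symmetric] mult_ac)
    also have "\<dots> \<le> c * a powr Lc * b powr Ls * hda_loss (\<rho> powr r) (\<rho> * a) (\<rho> * b)"
      using elim c ab corner by (intro mult_left_mono) auto
    also have "\<dots> \<le> ED_hda Lc Ls \<rho> (\<rho> powr r)"
      using elim ab by (intro ED_ge) auto
    finally show ?case .
  qed
  with c c0 B show "decays_at_most (\<lambda>\<rho>. ED_hda Lc Ls \<rho> (\<rho> powr r)) (Lc * \<alpha> + Ls * \<beta> + d)"
    unfolding decays_at_most_def by (intro exI[of _ "c * B powr Ls * c0"]) auto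
qed

text \<open>The \<open>max\<close> is the largest exponent among the terms of \<open>1 + g + e (1 + h)\<close> at
  \<open>h = \<rho> powr (1 - \<alpha>)\<close>, \<open>g = \<rho> powr (1 - \<beta>)\<close>, \<open>e = \<rho> powr r\<close>.\<close>

lemma ED_hda_decays_at_most:
  assumes Lc: "Lc > 0" and Ls: "Ls > 0" and \<alpha>: "\<alpha> \<ge> 0" and \<beta>: "\<beta> \<ge> 0"
    and D: "Lc * \<alpha> + Ls * \<beta> + max (max 0 (1 - \<beta>)) (max r (r + 1 - \<alpha>)) \<le> D"
  shows "decays_at_most (\<lambda>\<rho>. ED_hda Lc Ls \<rho> (\<rho> powr r)) D"
proof (rule ED_hda_decays_at_most_witness[OF Lc Ls \<alpha> \<beta> _ _ _ _ D, of 1 "1 / 4"])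
  define m where "m = max (max 0 (1 - \<beta>)) (max r (r + 1 - \<alpha>))"
  show "eventually (\<lambda>\<rho>. 1 / 4 * \<rho> powr (- m)
      \<le> hda_loss (\<rho> powr r) (\<rho> powr (1 - \<alpha>)) (1 * \<rho> powr (1 - \<beta>))) at_top"
    using eventually_ge_at_top[of 1]
  proof eventually_elim
    case (elim \<rho>)
    have "1 \<le> \<rho> powr m"
      using elim by (intro ge_one_powr_ge_zero) (auto simp: m_def)
    moreover have "\<rho> powr (1 - \<beta>) \<le> \<rho> powr m"
      using elim by (intro powr_mono) (simp_all add: m_def)
    moreover have "\<rho> powr r \<le> \<rho> powr m"
      using elim by (intro powr_mono) (simp_all add: m_def)
    moreover have "\<rho> powr (r + (1 - \<alpha>)) \<le> \<rho> powr m"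
      using elim by (intro powr_mono) (simp_all add: m_def)
    ultimately have "1 + \<rho> powr (1 - \<beta>) + \<rho> powr r * (1 + \<rho> powr (1 - \<alpha>)) \<le> 4 * \<rho> powr m"
      using elim by (simp add: powr_add distrib_left)
    moreover have "0 < 1 + \<rho> powr (1 - \<beta>) + \<rho> powr r * (1 + \<rho> powr (1 - \<alpha>))"
      by (simp add: add_pos_nonneg)
    ultimately have "1 / (4 * \<rho> powr m) \<le> 1 / (1 + \<rho> powr (1 - \<beta>) + \<rho> powr r * (1 + \<rho> powr (1 - \<alpha>)))"
      by (intro frac_le) auto
    also have "\<dots> \<le> hda_loss (\<rho> powr r) (\<rho> powr (1 - \<alpha>)) (\<rho> powr (1 - \<beta>))"
      using elim by (intro hda_loss_ge) auto
    finally show ?case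
      by (simp add: powr_minus_divide)
  qed
qed auto

lemma ED_hda_decays_at_most_outage:
  assumes Lc: "Lc > 0" and Ls: "Ls > 0" and \<alpha>: "\<alpha> \<ge> 0" and \<beta>: "\<beta> \<ge> 0" and B: "0 < B" "B \<le> 1"
    and outage: "eventually (\<lambda>\<rho>. hda_outage (\<rho> powr r) (\<rho> powr (1 - \<alpha>)) (B * \<rho> powr (1 - \<beta>))) at_top"
    and D: "Lc * \<alpha> + Ls * \<beta> + max 0 (1 - \<beta>) \<le> D"
  shows "decays_at_most (\<lambda>\<rho>. ED_hda Lc Ls \<rho> (\<rho> powr r)) D"
proof (rule ED_hda_decays_at_most_witness[OF Lc Ls \<alpha> \<beta> B _ _ D, of "1 / 2"])
  define m where "m = max 0 (1 - \<beta>)"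
  show "eventually (\<lambda>\<rho>. 1 / 2 * \<rho> powr (- m)
      \<le> hda_loss (\<rho> powr r) (\<rho> powr (1 - \<alpha>)) (B * \<rho> powr (1 - \<beta>))) at_top"
    using outage eventually_ge_at_top[of 1]
  proof eventually_elim
    case (elim \<rho>)
    have "1 \<le> \<rho> powr m"
      using elim(2) by (intro ge_one_powr_ge_zero) (simp_all add: m_def)
    moreover have "\<rho> powr (1 - \<beta>) \<le> \<rho> powr m"
      using elim(2) by (intro powr_mono) (simp_all add: m_def)
    moreover have "B * \<rho> powr (1 - \<beta>) \<le> \<rho> powr (1 - \<beta>)"
      using B by (intro mult_left_le_one_le) auto
    ultimately have "1 + B * \<rho> powr (1 - \<beta>) \<le> 2 * \<rho> powr m"
      by linarith
    then have "1 / (2 * \<rho> powr m) \<le> 1 / (1 + B * \<rho> powr (1 - \<beta>))"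
      using B by (intro frac_le add_pos_nonneg) auto
    also have "\<dots> = hda_loss (\<rho> powr r) (\<rho> powr (1 - \<alpha>)) (B * \<rho> powr (1 - \<beta>))"
      using elim(1) by (rule hda_loss_outage[symmetric])
    finally show ?case
      by (simp add: powr_minus_divide)
  qed
qed auto

lemma eventually_hda_outage:
  assumes "0 \<le> B" and "eventually (\<lambda>\<rho>. 1 + B * \<rho> powr (1 - \<beta>) \<le> \<rho> powr r) at_top"
  shows "eventually (\<lambda>\<rho>. hda_outage (\<rho> powr r) (\<rho> powr (1 - 0)) (B * \<rho> powr (1 - \<beta>))) at_top"
  using assms(2) by eventually_elim (use assms(1) in \<open>auto intro: hda_outage_if_le\<close>)

section \<open>Upper bounds on the expected distortion\<close>

definition power_monomial :: "real \<Rightarrow> real \<Rightarrow> real \<Rightarrow> real \<Rightarrow> real \<Rightarrow> real \<Rightarrow> real \<Rightarrow> real" where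
  "power_monomial K c s t \<rho> x y = exp K * \<rho> powr (- c) * x powr (- s) * y powr (- t)"

lemma power_monomial_nonneg: "power_monomial K c s t \<rho> x y \<ge> 0"
  by (simp add: power_monomial_def)

lemma power_monomial_eq_exp:
  "\<rho> > 0 \<Longrightarrow> x > 0 \<Longrightarrow> y > 0 \<Longrightarrow>
    power_monomial K c s t \<rho> x y = exp (K - c * ln \<rho> - s * ln x - t * ln y)"
  by (simp add: power_monomial_def powr_def exp_diff exp_add exp_minus field_simps)

lemma power_monomial_powr:
  "\<rho> > 0 \<Longrightarrow> x > 0 \<Longrightarrow> y > 0 \<Longrightarrow>
    power_monomial K c s t \<rho> x y powr \<theta> = power_monomial (\<theta> * K) (\<theta> * c) (\<theta> * s) (\<theta> * t) \<rho> x y"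
  by (simp add: power_monomial_eq_exp powr_def algebra_simps)

lemma power_monomial_le_power_monomial:
  assumes "\<rho> > 0" "x > 0" "y > 0"
    and "K' - c' * ln \<rho> - s' * ln x - t' * ln y = K - c * ln \<rho> - s * ln x - t * ln y + d" and "0 \<le> d"
  shows "power_monomial K c s t \<rho> x y \<le> power_monomial K' c' s' t' \<rho> x y"
  using assms by (simp add: power_monomial_eq_exp)

lemma inverse_le_power_monomial:
  assumes "\<rho> > 0" "x > 0" "y > 0" "N > 0" "c * ln \<rho> + s * ln x + t * ln y - K \<le> ln N"
  shows "1 / N \<le> power_monomial K c s t \<rho> x y"
proof -
  have "1 / N = exp (- ln N)"
    using assms by (simp add: exp_minus inverse_eq_divide)
  also have "\<dots> \<le> exp (K - c * ln \<rho> - s * ln x - t * ln y)"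
    using assms(5) by simp
  finally show ?thesis
    using assms by (simp add: power_monomial_eq_exp)
qed

lemma ED_hda_le_moment_sum:
  assumes Lc: "Lc > 0" and Ls: "Ls > 0" and \<rho>: "\<rho> > 0" and I: "finite I"
    and moments: "\<And>K c s t. (K, c, s, t) \<in> I \<Longrightarrow> s < Lc \<and> t < Ls"
    and pointwise: "\<forall>x>0. \<forall>y>0. \<exists>(K, c, s, t)\<in>I.
      hda_loss (\<rho> powr r) (\<rho> * x) (\<rho> * y) \<le> power_monomial K c s t \<rho> x y"
  shows "ED_hda Lc Ls \<rho> (\<rho> powr r)
    \<le> (\<Sum>(K, c, s, t)\<in>I. exp K * \<rho> powr (- c) * (gamma_moment Lc s * gamma_moment Ls t))"
proof -
  define P where "P s t = (\<lambda>(x, y). (unit_gamma Lc x * x powr (- s)) * (unit_gamma Ls y * y powr (- t)))"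
    for s t
  define F where "F m z = (case m of (K, c, s, t) \<Rightarrow> exp K * \<rho> powr (- c) * P s t z)" for m z
  have P: "integrable (lborel \<Otimes>\<^sub>M lborel) (P s t)"
    "(\<integral>z. P s t z \<partial>(lborel \<Otimes>\<^sub>M lborel)) = gamma_moment Lc s * gamma_moment Ls t"
    if "(K, c, s, t) \<in> I" for K c s t
    using moments[OF that] unfolding P_def gamma_moment_def
    by (auto intro!: lborel_pair.integrable_product lborel_pair.integral_product integrable_unit_gamma_moment Lc Ls)
  have F: "integrable (lborel \<Otimes>\<^sub>M lborel) (F m) \<and> (\<integral>z. F m z \<partial>(lborel \<Otimes>\<^sub>M lborel))
      = (case m of (K, c, s, t) \<Rightarrow> exp K * \<rho> powr (- c) * (gamma_moment Lc s * gamma_moment Ls t))"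
    if "m \<in> I" for m
    using that P unfolding F_def by (cases m rule: prod_cases4) auto
  have "ED_hda Lc Ls \<rho> (\<rho> powr r) \<le> (\<integral>z. (\<Sum>m\<in>I. F m z) \<partial>(lborel \<Otimes>\<^sub>M lborel))"
    unfolding ED_hda_eq
  proof (rule integral_mono)
    fix z :: "real \<times> real"
    obtain x y where z: "z = (x, y)" by (cases z)
    have sum_eq: "(\<Sum>m\<in>I. F m (x, y))
        = unit_gamma Lc x * unit_gamma Ls y * (\<Sum>(K, c, s, t)\<in>I. power_monomial K c s t \<rho> x y)"
      unfolding F_def P_def power_monomial_def by (simp add: sum_distrib_left split_beta mult_ac)
    show "(\<lambda>(x, y). unit_gamma Lc x * unit_gamma Ls y * hda_loss (\<rho> powr r) (\<rho> * x) (\<rho> * y)) z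
        \<le> (\<Sum>m\<in>I. F m z)"
    proof (cases "x > 0 \<and> y > 0")
      case True
      then obtain K c s t where mem: "(K, c, s, t) \<in> I"
        and le: "hda_loss (\<rho> powr r) (\<rho> * x) (\<rho> * y) \<le> power_monomial K c s t \<rho> x y"
        using pointwise by blast
      have "power_monomial K c s t \<rho> x y \<le> (\<Sum>(K, c, s, t)\<in>I. power_monomial K c s t \<rho> x y)"
        using mem I by (subst sum.remove[of I "(K, c, s, t)"]) (auto intro!: sum_nonneg simp: power_monomial_nonneg)
      with le have "hda_loss (\<rho> powr r) (\<rho> * x) (\<rho> * y) \<le> (\<Sum>(K, c, s, t)\<in>I. power_monomial K c s t \<rho> x y)"
        by (rule order_trans)
      then show ?thesis
        unfolding z sum_eq using unit_gamma_nonneg Lc Ls by (simp add: mult_left_mono)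
    qed (auto simp: z sum_eq unit_gamma_nonpos_eq_0)
  qed (use integrable_ED_hda_integrand[OF Lc Ls \<rho>] \<rho> F in auto)
  also have "\<dots> = (\<Sum>(K, c, s, t)\<in>I. exp K * \<rho> powr (- c) * (gamma_moment Lc s * gamma_moment Ls t))"
    using F by (simp add: Bochner_Integration.integral_sum split_beta)
  finally show ?thesis .
qed

lemma ED_hda_decays_at_least_strict:
  assumes Lc: "Lc > 0" and Ls: "Ls > 0" and I: "finite I"
    and params: "\<And>K c s t. (K, c, s, t) \<in> I \<Longrightarrow> s < Lc \<and> t < Ls \<and> D \<le> c"
    and pointwise: "eventually (\<lambda>\<rho>. \<forall>x>0. \<forall>y>0. \<exists>(K, c, s, t)\<in>I.
      hda_loss (\<rho> powr r) (\<rho> * x) (\<rho> * y) \<le> power_monomial K c s t \<rho> x y) at_top"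
  shows "decays_at_least (\<lambda>\<rho>. ED_hda Lc Ls \<rho> (\<rho> powr r)) D"
proof -
  have "eventually (\<lambda>\<rho>. ED_hda Lc Ls \<rho> (\<rho> powr r)
      \<le> (\<Sum>(K, c, s, t)\<in>I. exp K * gamma_moment Lc s * gamma_moment Ls t) * \<rho> powr (- D)) at_top"
    using pointwise eventually_ge_at_top[of 1]
  proof eventually_elim
    case (elim \<rho>)
    have "ED_hda Lc Ls \<rho> (\<rho> powr r)
        \<le> (\<Sum>(K, c, s, t)\<in>I. exp K * \<rho> powr (- c) * (gamma_moment Lc s * gamma_moment Ls t))"
      using elim params by (intro ED_hda_le_moment_sum[OF Lc Ls _ I]) auto
    also have "\<dots> \<le> (\<Sum>(K, c, s, t)\<in>I. exp K * gamma_moment Lc s * gamma_moment Ls t * \<rho> powr (- D))"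
    proof (rule sum_mono, clarify)
      fix K c s t
      assume "(K, c, s, t) \<in> I"
      then have "\<rho> powr (- c) \<le> \<rho> powr (- D)"
        using params elim by (intro powr_mono) auto
      then have "exp K * (gamma_moment Lc s * gamma_moment Ls t) * \<rho> powr (- c)
          \<le> exp K * (gamma_moment Lc s * gamma_moment Ls t) * \<rho> powr (- D)"
        using gamma_moment_nonneg Lc Ls by (intro mult_left_mono) auto
      then show "exp K * \<rho> powr (- c) * (gamma_moment Lc s * gamma_moment Ls t)
          \<le> exp K * gamma_moment Lc s * gamma_moment Ls t * \<rho> powr (- D)"
        by (simp add: mult_ac)
    qed
    finally show ?case
      by (simp add: sum_distrib_right split_beta)
  qed
  then show ?thesis
    unfolding decays_at_least_def by blast
qed

text \<open>The moment conditions on the monomials need only hold with equality: since the loss lies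
  in \<open>[0, 1]\<close>, raising the bounds to a power \<open>\<theta> < 1\<close> makes all exponents strict at the cost of
  an arbitrarily small part of the decay exponent.\<close>

lemma ED_hda_decays_at_least:
  assumes Lc: "Lc > 0" and Ls: "Ls > 0" and I: "finite I"
    and params: "\<And>K c s t. (K, c, s, t) \<in> I \<Longrightarrow> s \<le> Lc \<and> t \<le> Ls \<and> D \<le> c"
    and pointwise: "eventually (\<lambda>\<rho>. \<forall>x>0. \<forall>y>0. \<exists>(K, c, s, t)\<in>I.
      hda_loss (\<rho> powr r) (\<rho> * x) (\<rho> * y) \<le> power_monomial K c s t \<rho> x y) at_top"
    and "D' < D"
  shows "decays_at_least (\<lambda>\<rho>. ED_hda Lc Ls \<rho> (\<rho> powr r)) D'"
proof -
  obtain \<theta> where \<theta>: "0 < \<theta>" "\<theta> < 1" "D' < \<theta> * D"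
    using obtain_factor_below_one[OF \<open>D' < D\<close>] by blast
  define J where "J = (\<lambda>(K, c, s, t). (\<theta> * K, \<theta> * c, \<theta> * s, \<theta> * t)) ` I"
  show ?thesis
  proof (rule ED_hda_decays_at_least_strict[OF Lc Ls])
    show "finite J"
      using I by (simp add: J_def)
    show "s' < Lc \<and> t' < Ls \<and> D' \<le> c'" if "(K', c', s', t') \<in> J" for K' c' s' t'
    proof -
      from that obtain K c s t where "(K, c, s, t) \<in> I"
        and eq: "c' = \<theta> * c" "s' = \<theta> * s" "t' = \<theta> * t"
        by (auto simp: J_def)
      with params have "s \<le> Lc" "t \<le> Ls" "D \<le> c"
        by auto
      from \<open>D \<le> c\<close> have "\<theta> * D \<le> \<theta> * c"
        using \<theta> by (intro mult_left_mono) auto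
      then have "D' \<le> c'"
        using eq \<theta> by linarith
      moreover have "s' < Lc" "t' < Ls"
        using eq \<open>s \<le> Lc\<close> \<open>t \<le> Ls\<close> \<theta> Lc Ls by (auto intro: mult_less_of_le)
      ultimately show ?thesis
        by simp
    qed
    show "eventually (\<lambda>\<rho>. \<forall>x>0. \<forall>y>0. \<exists>(K, c, s, t)\<in>J.
        hda_loss (\<rho> powr r) (\<rho> * x) (\<rho> * y) \<le> power_monomial K c s t \<rho> x y) at_top"
      using pointwise eventually_gt_at_top[of 0]
    proof (eventually_elim, intro allI impI)
      fix \<rho> x y :: real
      assume \<rho>: "\<forall>x>0. \<forall>y>0. \<exists>(K, c, s, t)\<in>I. hda_loss (\<rho> powr r) (\<rho> * x) (\<rho> * y)
          \<le> power_monomial K c s t \<rho> x y" "\<rho> > 0" and "x > 0" "y > 0"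
      then obtain K c s t where "(K, c, s, t) \<in> I"
        and "hda_loss (\<rho> powr r) (\<rho> * x) (\<rho> * y) \<le> power_monomial K c s t \<rho> x y"
        by blast
      then have "hda_loss (\<rho> powr r) (\<rho> * x) (\<rho> * y) \<le> power_monomial K c s t \<rho> x y powr \<theta>"
        using \<rho> \<open>x > 0\<close> \<open>y > 0\<close> \<theta> by (intro hda_loss_le_powr) auto
      moreover have "(\<theta> * K, \<theta> * c, \<theta> * s, \<theta> * t) \<in> J"
        using \<open>(K, c, s, t) \<in> I\<close> by (force simp: J_def)
      ultimately show "\<exists>(K, c, s, t)\<in>J. hda_loss (\<rho> powr r) (\<rho> * x) (\<rho> * y) \<le> power_monomial K c s t \<rho> x y"
        using \<rho> \<open>x > 0\<close> \<open>y > 0\<close> by (force simp: power_monomial_powr)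
    qed
  qed
qed

lemma ED_hda_decays_at_least_by_outage:
  assumes Lc: "Lc > 0" and Ls: "Ls > 0" and I: "finite I"
    and params: "\<And>K c s t. (K, c, s, t) \<in> I \<Longrightarrow> s \<le> Lc \<and> t \<le> Ls \<and> D \<le> c"
    and ev: "eventually P at_top"
    and outage: "\<And>\<rho> x y. P \<rho> \<Longrightarrow> \<rho> > 0 \<Longrightarrow> x > 0 \<Longrightarrow> y > 0 \<Longrightarrow> hda_outage (\<rho> powr r) (\<rho> * x) (\<rho> * y) \<Longrightarrow>
      \<exists>(K, c, s, t)\<in>I. hda_loss (\<rho> powr r) (\<rho> * x) (\<rho> * y) \<le> power_monomial K c s t \<rho> x y"
    and no_outage: "\<And>\<rho> x y. P \<rho> \<Longrightarrow> \<rho> > 0 \<Longrightarrow> x > 0 \<Longrightarrow> y > 0 \<Longrightarrow> \<not> hda_outage (\<rho> powr r) (\<rho> * x) (\<rho> * y) \<Longrightarrow>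
      \<exists>(K, c, s, t)\<in>I. hda_loss (\<rho> powr r) (\<rho> * x) (\<rho> * y) \<le> power_monomial K c s t \<rho> x y"
    and "D' < D"
  shows "decays_at_least (\<lambda>\<rho>. ED_hda Lc Ls \<rho> (\<rho> powr r)) D'"
proof (rule ED_hda_decays_at_least[OF Lc Ls I params _ \<open>D' < D\<close>])
  show "eventually (\<lambda>\<rho>. \<forall>x>0. \<forall>y>0. \<exists>(K, c, s, t)\<in>I.
      hda_loss (\<rho> powr r) (\<rho> * x) (\<rho> * y) \<le> power_monomial K c s t \<rho> x y) at_top"
    using ev eventually_gt_at_top[of 0]
  proof (eventually_elim, intro allI impI)
    fix \<rho> x y :: real
    assume "P \<rho>" "\<rho> > 0" "x > 0" "y > 0"
    then show "\<exists>(K, c, s, t)\<in>I. hda_loss (\<rho> powr r) (\<rho> * x) (\<rho> * y) \<le> power_monomial K c s t \<rho> x y"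
      using outage no_outage by blast
  qed
qed

section \<open>Monomial bounds on the loss\<close>

lemma ln_one_plus_ge:
  fixes \<rho> y p :: real
  assumes "\<rho> > 0" "y > 0" "0 \<le> p" "p \<le> 1"
  shows "p * (ln \<rho> + ln y) \<le> ln (1 + \<rho> * y)"
proof -
  have "ln (\<rho> * y) \<le> ln (1 + \<rho> * y)"
    using assms by (intro ln_mono) auto
  moreover have "0 \<le> ln (1 + \<rho> * y)"
    using assms by simp
  ultimately show ?thesis
    using convex_combination_le[of "ln (1 + \<rho> * y)" "ln \<rho> + ln y" 0 p 0] assms by (simp add: ln_mult)
qed

lemma hda_loss_le_power_monomial:
  assumes "\<rho> > 0" "x > 0" "y > 0" "0 \<le> p" "p \<le> 1"
  shows "hda_loss (\<rho> powr r) (\<rho> * x) (\<rho> * y) \<le> power_monomial 0 p 0 p \<rho> x y"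
proof -
  have "p * ln \<rho> + 0 * ln x + p * ln y - 0 \<le> ln (1 + \<rho> * y)"
    using ln_one_plus_ge[of \<rho> y p] assms by (simp add: algebra_simps)
  then have "1 / (1 + \<rho> * y) \<le> power_monomial 0 p 0 p \<rho> x y"
    using assms by (intro inverse_le_power_monomial) (auto intro: add_pos_pos)
  moreover have "hda_loss (\<rho> powr r) (\<rho> * x) (\<rho> * y) \<le> 1 / (1 + \<rho> * y)"
    using assms by (intro hda_loss_le) auto
  ultimately show ?thesis
    by linarith
qed

lemma hda_loss_le_no_outage:
  assumes \<rho>: "\<rho> > 0" and x: "x > 0" and y: "y > 0" and no: "\<not> hda_outage (\<rho> powr r) (\<rho> * x) (\<rho> * y)"
    and pq: "0 \<le> p" "0 \<le> q" "p + q \<le> 1"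
  shows "hda_loss (\<rho> powr r) (\<rho> * x) (\<rho> * y) \<le> power_monomial 0 (p + q * (1 + r)) q p \<rho> x y"
proof -
  define N where "N = 1 + \<rho> * y + \<rho> powr r * (1 + \<rho> * x)"
  \<comment> \<open>\<open>N\<close> dominates \<open>1\<close>, \<open>g = \<rho> y\<close> and \<open>e h = \<rho>\<^sup>r \<rho> x\<close>; take a weighted geometric mean of the last two\<close>
  have "0 \<le> ln N" "ln (\<rho> * y) \<le> ln N" "ln (\<rho> powr r * (\<rho> * x)) \<le> ln N"
    using \<rho> x y by (simp_all add: N_def algebra_simps add_pos_pos)
  then have "p * (ln \<rho> + ln y) + q * (r * ln \<rho> + (ln \<rho> + ln x)) \<le> ln N"
    using convex_combination_le pq \<rho> x y by (simp add: ln_mult)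
  then have "(p + q * (1 + r)) * ln \<rho> + q * ln x + p * ln y - 0 \<le> ln N"
    by (simp add: algebra_simps)
  moreover have "0 < N"
    unfolding N_def using \<rho> x y by (intro add_pos_nonneg mult_nonneg_nonneg) auto
  ultimately have "1 / N \<le> power_monomial 0 (p + q * (1 + r)) q p \<rho> x y"
    using \<rho> x y by (intro inverse_le_power_monomial)
  then show ?thesis
    using no by (simp add: hda_loss_no_outage N_def)
qed

lemma hda_loss_le_outage_small_power:
  assumes \<rho>: "\<rho> > 0" and x: "x > 0" and y: "y > 0" and e: "\<rho> powr r \<le> 1 / 2"
    and out: "hda_outage (\<rho> powr r) (\<rho> * x) (\<rho> * y)" and p: "0 \<le> p" "p \<le> 1" and a: "0 \<le> a"
  shows "hda_loss (\<rho> powr r) (\<rho> * x) (\<rho> * y) \<le> power_monomial (a * ln 2) (p + a * (1 - r)) a p \<rho> x y"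
proof -
  have "\<rho> * x \<le> \<rho> * x * (1 + \<rho> * y)"
    using \<rho> x y by simp
  also have "\<dots> \<le> \<rho> powr r + \<rho> powr r * (\<rho> * x)"
    using out by (simp add: hda_outage_def algebra_simps)
  also have "\<rho> powr r * (\<rho> * x) \<le> 1 / 2 * (\<rho> * x)"
    using e \<rho> x by (intro mult_right_mono) auto
  finally have "ln (\<rho> * x) \<le> ln (2 * \<rho> powr r)"
    using \<rho> x by (intro ln_mono) auto
  then have "0 \<le> a * (ln 2 + r * ln \<rho> - ln \<rho> - ln x)"
    using \<rho> x a by (simp add: ln_mult)
  then have "power_monomial 0 p 0 p \<rho> x y \<le> power_monomial (a * ln 2) (p + a * (1 - r)) a p \<rho> x y"
    using \<rho> x y
    by (intro power_monomial_le_power_monomial[where d = "a * (ln 2 + r * ln \<rho> - ln \<rho> - ln x)"])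
      (simp_all add: algebra_simps)
  with hda_loss_le_power_monomial[OF \<rho> x y p] show ?thesis
    by (rule order_trans)
qed

lemma hda_loss_le_outage_unit_power:
  assumes \<rho>: "\<rho> > 0" and x: "x > 0" and y: "y > 0"
    and out: "hda_outage (\<rho> powr 0) (\<rho> * x) (\<rho> * y)" and p: "0 \<le> p" "p \<le> 1" and b: "0 \<le> b"
  shows "hda_loss (\<rho> powr 0) (\<rho> * x) (\<rho> * y) \<le> power_monomial 0 (p + 2 * b) b (p + b) \<rho> x y"
proof -
  have "(\<rho> * x) * (\<rho> * y) \<le> 1"
    using out \<rho> by (simp add: hda_outage_def algebra_simps)
  then have "ln ((\<rho> * x) * (\<rho> * y)) \<le> 0"
    using \<rho> x y by simp
  then have "0 \<le> b * (- (2 * ln \<rho> + ln x + ln y))"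
    using \<rho> x y b by (simp add: ln_mult)
  then have "power_monomial 0 p 0 p \<rho> x y \<le> power_monomial 0 (p + 2 * b) b (p + b) \<rho> x y"
    using \<rho> x y
    by (intro power_monomial_le_power_monomial[where d = "b * (- (2 * ln \<rho> + ln x + ln y))"])
      (simp_all add: algebra_simps)
  with hda_loss_le_power_monomial[OF \<rho> x y p] show ?thesis
    by (rule order_trans)
qed

lemma hda_loss_le_outage_large_power:
  assumes \<rho>: "\<rho> > 0" and x: "x > 0" and y: "y > 0" and e: "\<rho> powr r \<ge> 2"
    and out: "hda_outage (\<rho> powr r) (\<rho> * x) (\<rho> * y)" and p: "0 \<le> p" "p \<le> 1" and a: "0 \<le> a"
    and b: "0 \<le> b" and z: "0 \<le> z"
  shows "hda_loss (\<rho> powr r) (\<rho> * x) (\<rho> * y) \<le> power_monomial (a * ln 2) (p + a * (1 - r)) 0 (p + a) \<rho> x y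
    \<or> hda_loss (\<rho> powr r) (\<rho> * x) (\<rho> * y)
      \<le> power_monomial ((b - z) * ln 2) (1 + b * (2 - r) - z * (1 - r)) b (1 + b - z) \<rho> x y"
proof (cases "\<rho> * y \<le> 2 * \<rho> powr r")
  case True
  then have "ln (\<rho> * y) \<le> ln (2 * \<rho> powr r)"
    using \<rho> y by (intro ln_mono) auto
  then have "0 \<le> a * (ln 2 + r * ln \<rho> - ln \<rho> - ln y)"
    using \<rho> y a by (simp add: ln_mult)
  then have "power_monomial 0 p 0 p \<rho> x y \<le> power_monomial (a * ln 2) (p + a * (1 - r)) 0 (p + a) \<rho> x y"
    using \<rho> x y
    by (intro power_monomial_le_power_monomial[where d = "a * (ln 2 + r * ln \<rho> - ln \<rho> - ln y)"])
      (simp_all add: algebra_simps)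
  with hda_loss_le_power_monomial[OF \<rho> x y p]
  have "hda_loss (\<rho> powr r) (\<rho> * x) (\<rho> * y) \<le> power_monomial (a * ln 2) (p + a * (1 - r)) 0 (p + a) \<rho> x y"
    by (rule order_trans)
  then show ?thesis ..
next
  case False
  \<comment> \<open>in an outage with \<open>g > 2 e\<close> the product \<open>h g\<close> is at most \<open>2 e\<close>\<close>
  have "\<rho> * x * (\<rho> * y / 2) \<le> \<rho> * x * (1 + \<rho> * y - \<rho> powr r)"
    using \<rho> x False by (intro mult_left_mono) auto
  also have "\<dots> \<le> \<rho> powr r"
    using out by (simp add: hda_outage_def algebra_simps)
  finally have "ln (\<rho> * x * (\<rho> * y)) \<le> ln (2 * \<rho> powr r)"
    using \<rho> x y by (intro ln_mono) auto
  moreover have "ln (2 * \<rho> powr r) \<le> ln (\<rho> * y)"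
    using False \<rho> by (intro ln_mono) auto
  ultimately have "0 \<le> b * (ln 2 + r * ln \<rho> - (2 * ln \<rho> + ln x + ln y))"
    "0 \<le> z * (ln \<rho> + ln y - ln 2 - r * ln \<rho>)"
    using \<rho> x y b z by (simp_all add: ln_mult)
  then have "power_monomial 0 1 0 1 \<rho> x y
      \<le> power_monomial ((b - z) * ln 2) (1 + b * (2 - r) - z * (1 - r)) b (1 + b - z) \<rho> x y"
    using \<rho> x y
    by (intro power_monomial_le_power_monomial[where d = "b * (ln 2 + r * ln \<rho> - (2 * ln \<rho> + ln x + ln y))
      + z * (ln \<rho> + ln y - ln 2 - r * ln \<rho>)"]) (simp_all add: algebra_simps)
  with hda_loss_le_power_monomial[OF \<rho> x y zero_le_one order_refl]
  have "hda_loss (\<rho> powr r) (\<rho> * x) (\<rho> * y)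
      \<le> power_monomial ((b - z) * ln 2) (1 + b * (2 - r) - z * (1 - r)) b (1 + b - z) \<rho> x y"
    by (rule order_trans)
  then show ?thesis ..
qed

lemma hda_loss_le_no_outage_large_power:
  assumes \<rho>: "\<rho> > 0" and x: "x > 0" and y: "y > 0" and e: "\<rho> powr r \<ge> 2"
    and no: "\<not> hda_outage (\<rho> powr r) (\<rho> * x) (\<rho> * y)" and pq: "0 \<le> p" "0 \<le> q" "p + q \<le> 1" and a: "0 \<le> a"
  shows "hda_loss (\<rho> powr r) (\<rho> * x) (\<rho> * y)
    \<le> power_monomial (a * ln 2) (p + q * (1 + r) - a * (1 - r)) q (p - a) \<rho> x y"
proof -
  have "\<rho> powr r < \<rho> * x * (1 + \<rho> * y - \<rho> powr r)"
    using no by (simp add: hda_outage_def algebra_simps)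
  then have "0 < \<rho> * x * (1 + \<rho> * y - \<rho> powr r)"
    using e by linarith
  then have "0 < 1 + \<rho> * y - \<rho> powr r"
    using \<rho> x by (metis mult_pos_pos zero_less_mult_pos)
  then have "ln (\<rho> powr r / 2) \<le> ln (\<rho> * y)"
    using e by (intro ln_mono) auto
  then have "0 \<le> a * (ln \<rho> + ln y - r * ln \<rho> + ln 2)"
    using \<rho> y a by (simp add: ln_mult ln_div)
  then have "power_monomial 0 (p + q * (1 + r)) q p \<rho> x y
      \<le> power_monomial (a * ln 2) (p + q * (1 + r) - a * (1 - r)) q (p - a) \<rho> x y"
    using \<rho> x y
    by (intro power_monomial_le_power_monomial[where d = "a * (ln \<rho> + ln y - r * ln \<rho> + ln 2)"])
      (simp_all add: algebra_simps)
  with hda_loss_le_no_outage[OF \<rho> x y no pq] show ?thesis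
    by (rule order_trans)
qed

section \<open>The exponent for each \<open>r\<close>\<close>

definition hda_exponent_closed :: "real \<Rightarrow> real \<Rightarrow> real \<Rightarrow> real" where
  "hda_exponent_closed Lc Ls r =
    (if r \<le> -1 then min 1 Ls
     else if r < 0 then min 1 (min (1 + r * (1 - Ls)) (Ls + min 1 Lc * (1 + r)))
     else if r = 0 then min 1 (min (Lc + Ls) (2 * Ls))
     else if r < 1 then min Ls (min (r + Ls * (1 - r)) (1 + min 1 Lc * r))
     else min 1 Ls)"

lemma ED_hda_decays_at_least_general:
  assumes Lc: "Lc > 0" and Ls: "Ls > 0" and "D' < min 1 Ls"
  shows "decays_at_least (\<lambda>\<rho>. ED_hda Lc Ls \<rho> (\<rho> powr r)) D'"
proof (rule ED_hda_decays_at_least[OF Lc Ls _ _ _ \<open>D' < min 1 Ls\<close>, of "{(0, min 1 Ls, 0, min 1 Ls)}"])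
  show "eventually (\<lambda>\<rho>. \<forall>x>0. \<forall>y>0. \<exists>(K, c, s, t)\<in>{(0, min 1 Ls, 0, min 1 Ls)}.
      hda_loss (\<rho> powr r) (\<rho> * x) (\<rho> * y) \<le> power_monomial K c s t \<rho> x y) at_top"
    using eventually_gt_at_top[of 0]
    by eventually_elim (use Ls in \<open>auto intro!: hda_loss_le_power_monomial\<close>)
qed (use Lc in auto)

lemma hda_exponent_neg_le_exponents:
  fixes Lc Ls r :: real
  assumes Lc: "Lc > 0" and r: "-1 < r" "r < 0"
  defines "D \<equiv> min 1 (min (1 + r * (1 - Ls)) (Ls + min 1 Lc * (1 + r)))" and "p \<equiv> min 1 Ls"
  shows "D \<le> p + min Lc (1 - p) * (1 + r)" and "D \<le> p + Lc * (1 - r)"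
proof -
  have D: "D \<le> 1" "D \<le> 1 + r * (1 - Ls)" "D \<le> Ls + min 1 Lc * (1 + r)"
    by (simp_all add: D_def)
  have "min 1 Lc * (1 + r) \<le> Lc * (1 + r)" "min 1 Lc * (1 + r) \<le> Lc * (1 - r)"
    using r Lc by (auto intro: mult_mono)
  moreover have "0 \<le> min Lc (1 - p) * (1 + r)" "0 \<le> Lc * (1 - r)"
    using r Lc by (simp_all add: p_def)
  moreover have "p + (1 - p) * (1 + r) = 1 + r * (1 - Ls)" if "p = Ls"
    using that by (simp add: algebra_simps)
  ultimately show "D \<le> p + min Lc (1 - p) * (1 + r)" "D \<le> p + Lc * (1 - r)"
    using D by (auto simp: p_def min_def split: if_splits)
qed

lemma ED_hda_decays_at_least_neg:
  assumes Lc: "Lc > 0" and Ls: "Ls > 0" and r: "-1 < r" "r < 0"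
    and D': "D' < min 1 (min (1 + r * (1 - Ls)) (Ls + min 1 Lc * (1 + r)))"
  shows "decays_at_least (\<lambda>\<rho>. ED_hda Lc Ls \<rho> (\<rho> powr r)) D'"
proof -
  define p where "p = min 1 Ls"
  define q where "q = min Lc (1 - p)"
  define I where "I = {(0, p + q * (1 + r), q, p), (Lc * ln 2, p + Lc * (1 - r), Lc, p)}"
  have pq: "0 \<le> p" "p \<le> 1" "0 \<le> q" "p + q \<le> 1"
    using Lc Ls by (auto simp: p_def q_def)
  show ?thesis
  proof (rule ED_hda_decays_at_least_by_outage[OF Lc Ls _ _ eventually_powr_le_half[OF r(2)] _ _ D', of I])
    show "finite I"
      by (simp add: I_def)
    have "min 1 (min (1 + r * (1 - Ls)) (Ls + min 1 Lc * (1 + r))) \<le> p + q * (1 + r)"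
      "min 1 (min (1 + r * (1 - Ls)) (Ls + min 1 Lc * (1 + r))) \<le> p + Lc * (1 - r)"
      unfolding p_def q_def by (fact hda_exponent_neg_le_exponents[OF Lc r])+
    moreover have "q \<le> Lc" "p \<le> Ls"
      by (simp_all add: p_def q_def)
    ultimately show "s \<le> Lc \<and> t \<le> Ls \<and> min 1 (min (1 + r * (1 - Ls)) (Ls + min 1 Lc * (1 + r))) \<le> c"
      if "(K, c, s, t) \<in> I" for K c s t
      using that by (auto simp: I_def)
    show "\<exists>(K, c, s, t)\<in>I. hda_loss (\<rho> powr r) (\<rho> * x) (\<rho> * y) \<le> power_monomial K c s t \<rho> x y"
      if "\<rho> powr r \<le> 1 / 2" "\<rho> > 0" "x > 0" "y > 0" "hda_outage (\<rho> powr r) (\<rho> * x) (\<rho> * y)" for \<rho> x y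
      using hda_loss_le_outage_small_power[OF that(2-4,1,5) pq(1,2), of Lc] Lc by (simp add: I_def)
    show "\<exists>(K, c, s, t)\<in>I. hda_loss (\<rho> powr r) (\<rho> * x) (\<rho> * y) \<le> power_monomial K c s t \<rho> x y"
      if "\<rho> powr r \<le> 1 / 2" "\<rho> > 0" "x > 0" "y > 0" "\<not> hda_outage (\<rho> powr r) (\<rho> * x) (\<rho> * y)" for \<rho> x y
      using hda_loss_le_no_outage[OF that(2-5) pq(1,3,4)] by (simp add: I_def)
  qed
qed

lemma hda_exponent_zero_le_exponents:
  fixes Lc Ls :: real
  assumes Lc: "Lc > 0"
  defines "D \<equiv> min 1 (min (Lc + Ls) (2 * Ls))" and "p \<equiv> min 1 Ls" and "b \<equiv> min Lc Ls"
  shows "D \<le> p + min Lc (1 - p)" and "D \<le> min 1 (Ls - b) + 2 * b"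
  using Lc by (auto simp: D_def p_def b_def min_def)

lemma ED_hda_decays_at_least_zero:
  assumes Lc: "Lc > 0" and Ls: "Ls > 0" and D': "D' < min 1 (min (Lc + Ls) (2 * Ls))"
  shows "decays_at_least (\<lambda>\<rho>. ED_hda Lc Ls \<rho> (\<rho> powr 0)) D'"
proof -
  define p where "p = min 1 Ls"
  define q where "q = min Lc (1 - p)"
  define b where "b = min Lc Ls"
  define p' where "p' = min 1 (Ls - b)"
  define I :: "(real \<times> real \<times> real \<times> real) set"
    where "I = {(0, p + q * (1 + 0), q, p), (0, p' + 2 * b, b, p' + b)}"
  have pq: "0 \<le> p" "p \<le> 1" "0 \<le> q" "p + q \<le> 1" "0 \<le> p'" "p' \<le> 1" "0 \<le> b"
    using Lc Ls by (auto simp: p_def q_def p'_def b_def)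
  show ?thesis
  proof (rule ED_hda_decays_at_least_by_outage[OF Lc Ls _ _ eventually_True _ _ D', of I])
    show "finite I"
      by (simp add: I_def)
    have "min 1 (min (Lc + Ls) (2 * Ls)) \<le> p + q * (1 + 0)"
      "min 1 (min (Lc + Ls) (2 * Ls)) \<le> p' + 2 * b"
      unfolding p_def q_def p'_def b_def using hda_exponent_zero_le_exponents[OF Lc, of Ls] by simp_all
    moreover have "q \<le> Lc" "p \<le> Ls" "b \<le> Lc" "p' + b \<le> Ls"
      by (simp_all add: p_def q_def p'_def b_def)
    ultimately show "s \<le> Lc \<and> t \<le> Ls \<and> min 1 (min (Lc + Ls) (2 * Ls)) \<le> c"
      if "(K, c, s, t) \<in> I" for K c s t
      using that by (auto simp: I_def)
    show "\<exists>(K, c, s, t)\<in>I. hda_loss (\<rho> powr 0) (\<rho> * x) (\<rho> * y) \<le> power_monomial K c s t \<rho> x y"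
      if "\<rho> > 0" "x > 0" "y > 0" "hda_outage (\<rho> powr 0) (\<rho> * x) (\<rho> * y)" for \<rho> x y
      using hda_loss_le_outage_unit_power[OF that pq(5-7)] by (simp add: I_def del: powr_zero_eq_one)
    show "\<exists>(K, c, s, t)\<in>I. hda_loss (\<rho> powr 0) (\<rho> * x) (\<rho> * y) \<le> power_monomial K c s t \<rho> x y"
      if "\<rho> > 0" "x > 0" "y > 0" "\<not> hda_outage (\<rho> powr 0) (\<rho> * x) (\<rho> * y)" for \<rho> x y
      using hda_loss_le_no_outage[OF that pq(1,3,4)] by (simp add: I_def del: powr_zero_eq_one)
  qed
qed

lemma hda_exponent_pos_le_exponents:
  fixes Lc Ls r :: real
  assumes Lc: "Lc > 0" and r: "0 < r" "r < 1"
  defines "m \<equiv> min 1 Lc"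
  defines "p \<equiv> min 1 Ls" and "z \<equiv> max 0 (Lc + 1 - Ls)" and "a \<equiv> max 0 (1 - m - Ls)"
    and "D \<equiv> min Ls (min (r + Ls * (1 - r)) (1 + m * r))"
  shows "D \<le> p + (Ls - p) * (1 - r)"
    and "D \<le> 1 + Lc * (2 - r) - z * (1 - r)"
    and "D \<le> 1 - m + m * (1 + r) - a * (1 - r)"
proof -
  have D: "D \<le> Ls" "D \<le> r + Ls * (1 - r)" "D \<le> 1 + m * r"
    by (simp_all add: D_def)
  show "D \<le> p + (Ls - p) * (1 - r)"
    using D by (cases "Ls \<le> 1") (auto simp: p_def algebra_simps)
  have "m * r \<le> Lc * (2 - r)"
    using r Lc by (intro mult_mono) (auto simp: m_def)
  moreover have "1 + Lc * (2 - r) - (Lc + 1 - Ls) * (1 - r) = r + Ls * (1 - r) + Lc"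
    by (simp add: algebra_simps)
  ultimately show "D \<le> 1 + Lc * (2 - r) - z * (1 - r)"
    using D Lc by (auto simp: z_def max_def)
  have "1 - m + m * (1 + r) - (1 - m - Ls) * (1 - r) = r + Ls * (1 - r) + m"
    by (simp add: algebra_simps)
  then show "D \<le> 1 - m + m * (1 + r) - a * (1 - r)"
    using D Lc by (auto simp: a_def m_def max_def algebra_simps)
qed

lemma ED_hda_decays_at_least_pos:
  assumes Lc: "Lc > 0" and Ls: "Ls > 0" and r: "0 < r" "r < 1"
    and D': "D' < min Ls (min (r + Ls * (1 - r)) (1 + min 1 Lc * r))"
  shows "decays_at_least (\<lambda>\<rho>. ED_hda Lc Ls \<rho> (\<rho> powr r)) D'"
proof -
  define m where "m = min 1 Lc"
  define p where "p = min 1 Ls"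
  define z where "z = max 0 (Lc + 1 - Ls)"
  define a where "a = max 0 (1 - m - Ls)"
  define I where "I = {((Ls - p) * ln 2, p + (Ls - p) * (1 - r), 0, Ls),
    ((Lc - z) * ln 2, 1 + Lc * (2 - r) - z * (1 - r), Lc, 1 + Lc - z),
    (a * ln 2, 1 - m + m * (1 + r) - a * (1 - r), m, 1 - m - a)}"
  have params: "0 \<le> p" "p \<le> 1" "0 \<le> z" "0 \<le> a" "0 \<le> m" "m \<le> 1" "m \<le> Lc"
    using Lc Ls by (auto simp: p_def z_def a_def m_def)
  show ?thesis
  proof (rule ED_hda_decays_at_least_by_outage[OF Lc Ls _ _ eventually_ge_powr[OF r(1), of 2] _ _ D', of I])
    show "finite I"
      by (simp add: I_def)
    have "min Ls (min (r + Ls * (1 - r)) (1 + m * r)) \<le> p + (Ls - p) * (1 - r)"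
      "min Ls (min (r + Ls * (1 - r)) (1 + m * r)) \<le> 1 + Lc * (2 - r) - z * (1 - r)"
      "min Ls (min (r + Ls * (1 - r)) (1 + m * r)) \<le> 1 - m + m * (1 + r) - a * (1 - r)"
      unfolding m_def p_def z_def a_def by (fact hda_exponent_pos_le_exponents[OF Lc r])+
    moreover have "1 + Lc - z \<le> Ls" "1 - m - a \<le> Ls"
      by (simp_all add: z_def a_def)
    ultimately show "s \<le> Lc \<and> t \<le> Ls \<and> min Ls (min (r + Ls * (1 - r)) (1 + min 1 Lc * r)) \<le> c"
      if "(K, c, s, t) \<in> I" for K c s t
      using that params by (auto simp: I_def m_def[symmetric])
    show "\<exists>(K, c, s, t)\<in>I. hda_loss (\<rho> powr r) (\<rho> * x) (\<rho> * y) \<le> power_monomial K c s t \<rho> x y"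
      if "2 \<le> \<rho> powr r" "\<rho> > 0" "x > 0" "y > 0" "hda_outage (\<rho> powr r) (\<rho> * x) (\<rho> * y)" for \<rho> x y
      using hda_loss_le_outage_large_power[OF that(2-4,1,5) params(1,2), of "Ls - p" Lc z] params Lc
      by (auto simp: I_def p_def)
    show "\<exists>(K, c, s, t)\<in>I. hda_loss (\<rho> powr r) (\<rho> * x) (\<rho> * y) \<le> power_monomial K c s t \<rho> x y"
      if "2 \<le> \<rho> powr r" "\<rho> > 0" "x > 0" "y > 0" "\<not> hda_outage (\<rho> powr r) (\<rho> * x) (\<rho> * y)" for \<rho> x y
      using hda_loss_le_no_outage_large_power[OF that(2-4,1,5) _ params(5) _ params(4), of "1 - m"] params
      by (auto simp: I_def)
  qed
qed

lemma tendsto_hda_exponent_le_neg_one: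
  assumes Lc: "Lc > 0" and Ls: "Ls > 0" and r: "r \<le> -1"
  shows "((\<lambda>\<rho>. - ln (ED_hda Lc Ls \<rho> (\<rho> powr r)) / ln \<rho>) \<longlongrightarrow> min 1 Ls) at_top"
proof (rule tendsto_exponent_of_decay[OF _ ED_hda_decays_at_least_general[OF Lc Ls]])
  have "decays_at_most (\<lambda>\<rho>. ED_hda Lc Ls \<rho> (\<rho> powr r)) 1"
    by (rule ED_hda_decays_at_most[OF Lc Ls order_refl order_refl]) (use r in \<open>simp add: max_def\<close>)
  moreover have "decays_at_most (\<lambda>\<rho>. ED_hda Lc Ls \<rho> (\<rho> powr r)) Ls"
    by (rule ED_hda_decays_at_most[OF Lc Ls order_refl zero_le_one]) (use r in \<open>simp add: max_def\<close>)
  ultimately show "decays_at_most (\<lambda>\<rho>. ED_hda Lc Ls \<rho> (\<rho> powr r)) (min 1 Ls)"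
    by (rule decays_at_most_min)
qed

lemma tendsto_hda_exponent_neg:
  assumes Lc: "Lc > 0" and Ls: "Ls > 0" and r: "-1 < r" "r < 0"
  shows "((\<lambda>\<rho>. - ln (ED_hda Lc Ls \<rho> (\<rho> powr r)) / ln \<rho>)
    \<longlongrightarrow> min 1 (min (1 + r * (1 - Ls)) (Ls + min 1 Lc * (1 + r)))) at_top"
proof (rule tendsto_exponent_of_decay[OF _ ED_hda_decays_at_least_neg[OF Lc Ls r]])
  have "decays_at_most (\<lambda>\<rho>. ED_hda Lc Ls \<rho> (\<rho> powr r)) 1"
    by (rule ED_hda_decays_at_most[OF Lc Ls order_refl order_refl]) (use r in \<open>simp add: max_def\<close>)
  moreover have "decays_at_most (\<lambda>\<rho>. ED_hda Lc Ls \<rho> (\<rho> powr r)) (1 + r * (1 - Ls))"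
    by (rule ED_hda_decays_at_most[OF Lc Ls order_refl, of "- r"]) (use r in \<open>auto simp: max_def algebra_simps\<close>)
  moreover have "decays_at_most (\<lambda>\<rho>. ED_hda Lc Ls \<rho> (\<rho> powr r)) (Ls + min 1 Lc * (1 + r))"
  proof (cases "Lc \<le> 1")
    case True
    then show ?thesis
      by (intro ED_hda_decays_at_most[OF Lc Ls, of "1 + r" 1]) (use r in \<open>auto simp: max_def\<close>)
  next
    case False
    then show ?thesis
      by (intro ED_hda_decays_at_most[OF Lc Ls order_refl zero_le_one]) (use r in \<open>auto simp: max_def\<close>)
  qed
  ultimately show "decays_at_most (\<lambda>\<rho>. ED_hda Lc Ls \<rho> (\<rho> powr r))
      (min 1 (min (1 + r * (1 - Ls)) (Ls + min 1 Lc * (1 + r))))"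
    by (intro decays_at_most_min)
qed

lemma tendsto_hda_exponent_zero:
  assumes Lc: "Lc > 0" and Ls: "Ls > 0"
  shows "((\<lambda>\<rho>. - ln (ED_hda Lc Ls \<rho> (\<rho> powr 0)) / ln \<rho>) \<longlongrightarrow> min 1 (min (Lc + Ls) (2 * Ls))) at_top"
proof (rule tendsto_exponent_of_decay[OF _ ED_hda_decays_at_least_zero[OF Lc Ls]])
  have "decays_at_most (\<lambda>\<rho>. ED_hda Lc Ls \<rho> (\<rho> powr 0)) 1"
    by (rule ED_hda_decays_at_most[OF Lc Ls order_refl order_refl]) (simp add: max_def)
  moreover have "decays_at_most (\<lambda>\<rho>. ED_hda Lc Ls \<rho> (\<rho> powr 0)) (Lc + Ls)"
    by (rule ED_hda_decays_at_most[OF Lc Ls zero_le_one zero_le_one]) (simp add: max_def)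
  moreover have "decays_at_most (\<lambda>\<rho>. ED_hda Lc Ls \<rho> (\<rho> powr 0)) (2 * Ls)"
  proof (rule ED_hda_decays_at_most_outage[OF Lc Ls order_refl _ zero_less_one order_refl])
    \<comment> \<open>at \<open>h = \<rho>\<close>, \<open>g = 1/\<rho>\<close> the outage condition \<open>h g \<le> 1\<close> holds with equality\<close>
    show "eventually (\<lambda>\<rho>. hda_outage (\<rho> powr 0) (\<rho> powr (1 - 0)) (1 * \<rho> powr (1 - 2))) at_top"
      using eventually_gt_at_top[of 0]
      by eventually_elim (simp add: hda_outage_def powr_minus_divide field_simps)
  qed auto
  ultimately show "decays_at_most (\<lambda>\<rho>. ED_hda Lc Ls \<rho> (\<rho> powr 0)) (min 1 (min (Lc + Ls) (2 * Ls)))"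
    by (intro decays_at_most_min)
qed

lemma tendsto_hda_exponent_pos:
  assumes Lc: "Lc > 0" and Ls: "Ls > 0" and r: "0 < r" "r < 1"
  shows "((\<lambda>\<rho>. - ln (ED_hda Lc Ls \<rho> (\<rho> powr r)) / ln \<rho>)
    \<longlongrightarrow> min Ls (min (r + Ls * (1 - r)) (1 + min 1 Lc * r))) at_top"
proof (rule tendsto_exponent_of_decay[OF _ ED_hda_decays_at_least_pos[OF Lc Ls r]])
  have ev: "eventually (\<lambda>\<rho>. 2 \<le> \<rho> powr r) at_top"
    using r by (intro eventually_ge_powr) auto
  have "decays_at_most (\<lambda>\<rho>. ED_hda Lc Ls \<rho> (\<rho> powr r)) Ls"
    using ev by (intro ED_hda_decays_at_most_outage[OF Lc Ls order_refl zero_le_one zero_less_one order_refl]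
      eventually_hda_outage) (auto elim: eventually_mono)
  moreover have "decays_at_most (\<lambda>\<rho>. ED_hda Lc Ls \<rho> (\<rho> powr r)) (r + Ls * (1 - r))"
  proof (rule ED_hda_decays_at_most_outage[OF Lc Ls order_refl, of "1 - r" "1 / 2"])
    show "eventually (\<lambda>\<rho>. hda_outage (\<rho> powr r) (\<rho> powr (1 - 0)) (1 / 2 * \<rho> powr (1 - (1 - r)))) at_top"
      using ev r by (intro eventually_hda_outage) (auto elim: eventually_mono)
  qed (use r in \<open>auto simp: max_def\<close>)
  moreover have "decays_at_most (\<lambda>\<rho>. ED_hda Lc Ls \<rho> (\<rho> powr r)) (1 + min 1 Lc * r)"
  proof (cases "Lc \<le> 1")
    case True
    then show ?thesis
      by (intro ED_hda_decays_at_most[OF Lc Ls, of r 0]) (use r in \<open>auto simp: max_def\<close>)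
  next
    case False
    then show ?thesis
      by (intro ED_hda_decays_at_most[OF Lc Ls order_refl order_refl]) (use r in \<open>auto simp: max_def\<close>)
  qed
  ultimately show "decays_at_most (\<lambda>\<rho>. ED_hda Lc Ls \<rho> (\<rho> powr r))
      (min Ls (min (r + Ls * (1 - r)) (1 + min 1 Lc * r)))"
    by (intro decays_at_most_min)
qed

lemma tendsto_hda_exponent_ge_one:
  assumes Lc: "Lc > 0" and Ls: "Ls > 0" and r: "r \<ge> 1"
  shows "((\<lambda>\<rho>. - ln (ED_hda Lc Ls \<rho> (\<rho> powr r)) / ln \<rho>) \<longlongrightarrow> min 1 Ls) at_top"
proof (rule tendsto_exponent_of_decay[OF _ ED_hda_decays_at_least_general[OF Lc Ls]])
  have "eventually (\<lambda>\<rho>. 2 \<le> \<rho> powr r) at_top"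
    using r by (intro eventually_ge_powr) auto
  then have "decays_at_most (\<lambda>\<rho>. ED_hda Lc Ls \<rho> (\<rho> powr r)) Ls"
    using r by (intro ED_hda_decays_at_most_outage[OF Lc Ls order_refl zero_le_one zero_less_one order_refl]
      eventually_hda_outage) (auto elim: eventually_mono)
  moreover have "decays_at_most (\<lambda>\<rho>. ED_hda Lc Ls \<rho> (\<rho> powr r)) 1"
  proof (rule ED_hda_decays_at_most_outage[OF Lc Ls order_refl order_refl, of "1 / 2"])
    have "eventually (\<lambda>\<rho>. 1 + 1 / 2 * \<rho> powr (1 - 0) \<le> \<rho> powr r) at_top"
      using eventually_ge_at_top[of 2]
    proof eventually_elim
      case (elim \<rho>)
      then have "\<rho> powr 1 \<le> \<rho> powr r"
        using r by (intro powr_mono) auto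
      with elim show ?case by simp
    qed
    then show "eventually (\<lambda>\<rho>. hda_outage (\<rho> powr r) (\<rho> powr (1 - 0)) (1 / 2 * \<rho> powr (1 - 0))) at_top"
      using r by (intro eventually_hda_outage) auto
  qed auto
  ultimately show "decays_at_most (\<lambda>\<rho>. ED_hda Lc Ls \<rho> (\<rho> powr r)) (min 1 Ls)"
    by (simp add: decays_at_most_min min.commute)
qed

lemma tendsto_hda_exponent:
  assumes Lc: "Lc > 0" and Ls: "Ls > 0"
  shows "((\<lambda>\<rho>. - ln (ED_hda Lc Ls \<rho> (\<rho> powr r)) / ln \<rho>) \<longlongrightarrow> hda_exponent_closed Lc Ls r) at_top"
proof -
  consider "r \<le> -1" | "-1 < r" "r < 0" | "r = 0" | "0 < r" "r < 1" | "r \<ge> 1"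
    by linarith
  then show ?thesis
  proof cases
    case 1 then show ?thesis using tendsto_hda_exponent_le_neg_one[OF Lc Ls] by (simp add: hda_exponent_closed_def)
  next
    case 2 then show ?thesis using tendsto_hda_exponent_neg[OF Lc Ls] by (simp add: hda_exponent_closed_def)
  next
    case 3 then show ?thesis using tendsto_hda_exponent_zero[OF Lc Ls] by (simp add: hda_exponent_closed_def)
  next
    case 4 then show ?thesis using tendsto_hda_exponent_pos[OF Lc Ls] by (simp add: hda_exponent_closed_def)
  next
    case 5 then show ?thesis using tendsto_hda_exponent_ge_one[OF Lc Ls] by (simp add: hda_exponent_closed_def)
  qed
qed

lemma hda_exponent_eq_closed:
  assumes "Lc > 0" "Ls > 0"
  shows "hda_exponent Lc Ls r = hda_exponent_closed Lc Ls r"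
  unfolding hda_exponent_def by (rule tendsto_Lim[OF trivial_limit_at_top_linorder tendsto_hda_exponent[OF assms]])

section \<open>The optimal exponent\<close>

lemma hda_exponent_closed_le:
  assumes Lc: "Lc > 0" and Ls: "Ls > 0"
  shows "hda_exponent_closed Lc Ls r \<le> min 1 (Ls + Lc) + min 1 Lc * max 0 (Ls - 1) / (Ls - 1 + min 1 Lc)"
proof -
  define m where "m = min 1 Lc"
  have m: "0 < m" "m \<le> 1" "m \<le> Lc"
    using Lc by (auto simp: m_def)
  have base: "min 1 (Ls + Lc) \<le> min 1 (Ls + Lc) + m * max 0 (Ls - 1) / (Ls - 1 + m)"
    using m by (cases "Ls \<le> 1") auto
  have "hda_exponent_closed Lc Ls r \<le> min 1 (Ls + Lc) + m * max 0 (Ls - 1) / (Ls - 1 + m)"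
  proof (cases "0 < r \<and> r < 1 \<and> 1 < Ls")
    case True
    then have "hda_exponent_closed Lc Ls r \<le> min (1 + (Ls - 1) * (1 - r)) (1 + m * r)"
      by (auto simp: hda_exponent_closed_def m_def algebra_simps)
    also have "\<dots> \<le> 1 + m * ((Ls - 1) / (Ls - 1 + m))"
      using True m by (intro min_affine_le_crossing) auto
    finally show ?thesis
      using True Lc by (simp add: min_def)
  next
    case False
    have "m * (1 + r) \<le> Lc" if "r < 0"
      using m that by (smt (verit) mult_left_le)
    with False Lc Ls have "hda_exponent_closed Lc Ls r \<le> min 1 (Ls + Lc)"
      by (auto simp: hda_exponent_closed_def m_def)
    with base show ?thesis
      by linarith
  qed
  then show ?thesis
    by (simp add: m_def)
qed

lemma hda_exponent_closed_at_crossing: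
  fixes Lc Ls :: real
  assumes Lc: "Lc > 0" and Ls: "Ls > 1"
  defines "m \<equiv> min 1 Lc"
  defines "r \<equiv> (Ls - 1) / (Ls - 1 + m)"
  shows "hda_exponent_closed Lc Ls r = 1 + m * r"
proof -
  define K where "K = Ls - 1"
  have K: "K > 0" "K + m > 0" and m: "0 < m"
    using Ls Lc by (auto simp: K_def m_def)
  have r: "0 < r" "r < 1"
    using K m by (auto simp: K_def r_def)
  have "(K + m) * r = K"
    using K by (simp add: r_def K_def)
  moreover have "r + Ls * (1 - r) = 1 + K - K * r"
    by (simp add: K_def algebra_simps)
  ultimately have cross: "r + Ls * (1 - r) = 1 + m * r"
    by (simp add: algebra_simps)
  have "m * r = K * (m / (K + m))"
    by (simp add: r_def K_def)
  also have "\<dots> \<le> K * 1"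
    using K m by (intro mult_left_mono) auto
  finally have "m * r \<le> K"
    by simp
  then show ?thesis
    using r cross by (simp add: hda_exponent_closed_def m_def[symmetric] K_def)
qed

lemma hda_exponent_closed_approx:
  assumes Lc: "Lc > 0" and Ls: "Ls > 0" and \<epsilon>: "\<epsilon> > 0"
  shows "\<exists>r. min 1 (Ls + Lc) + min 1 Lc * max 0 (Ls - 1) / (Ls - 1 + min 1 Lc) - \<epsilon>
    \<le> hda_exponent_closed Lc Ls r"
proof (cases "Ls \<le> 1")
  case True
  \<comment> \<open>the supremum \<open>min 1 (Ls + Lc)\<close> is approached as \<open>r \<rightarrow> 0\<^sup>-\<close>\<close>
  define m where "m = min 1 Lc"
  define t where "t = min (1 / 2) \<epsilon>"
  have t: "0 < t" "t \<le> 1 / 2" "t \<le> \<epsilon>"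
    using \<epsilon> by (auto simp: t_def)
  have "t * (1 - Ls) \<le> t" "m * t \<le> t"
    using t Ls Lc by (auto simp: m_def mult_left_le mult_left_le_one_le)
  moreover have "min 1 (Ls + Lc) \<le> Ls + m" "min 1 (Ls + Lc) \<le> 1"
    using Ls by (auto simp: m_def)
  moreover have "(- t) * (1 - Ls) = - (t * (1 - Ls))" "m * (1 + - t) = m - m * t"
    by (simp_all add: algebra_simps)
  ultimately have "min 1 (Ls + Lc) - t \<le> min 1 (min (1 + (- t) * (1 - Ls)) (Ls + m * (1 + - t)))"
    using t by (simp only: min.bounded_iff) linarith
  also have "\<dots> = hda_exponent_closed Lc Ls (- t)"
    using t by (simp add: hda_exponent_closed_def m_def)
  finally show ?thesis
    using True t by (intro exI[of _ "- t"]) simp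
next
  case False
  then show ?thesis
    using hda_exponent_closed_at_crossing[OF Lc, of Ls] \<epsilon> Lc
    by (intro exI[of _ "(Ls - 1) / (Ls - 1 + min 1 Lc)"]) simp
qed

theorem lemma10:
  fixes Lc Ls :: real
  assumes "Lc > 0" and "Ls > 0"
  shows "(\<forall>r::real. \<exists>d::real.
            ((\<lambda>\<rho>. - ln (ED_hda Lc Ls \<rho> (\<rho> powr r)) / ln \<rho>) \<longlongrightarrow> d) at_top)
       \<and> (SUP r::real. hda_exponent Lc Ls r)
           = min 1 (Ls + Lc) + min 1 Lc * max 0 (Ls - 1) / (Ls - 1 + min 1 Lc)"
proof
  show "\<forall>r. \<exists>d. ((\<lambda>\<rho>. - ln (ED_hda Lc Ls \<rho> (\<rho> powr r)) / ln \<rho>) \<longlongrightarrow> d) at_top"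
    using tendsto_hda_exponent[OF assms] by blast
  show "(SUP r. hda_exponent Lc Ls r)
      = min 1 (Ls + Lc) + min 1 Lc * max 0 (Ls - 1) / (Ls - 1 + min 1 Lc)"
    unfolding hda_exponent_eq_closed[OF assms]
    by (rule SUP_eq_of_approx[OF hda_exponent_closed_le[OF assms] hda_exponent_closed_approx[OF assms]])
qed

end
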